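(* Let $f \in \mathcal{C}_{2\pi}$, let $A_n[f]$ be the Toeplitz matrix generated by $f$ and $c_n[f]$ the optimal circulant preconditioner for $A_n[f]$. Assume that $\cos c_n[f]$ is invertible for every $n$ and that there is a constant $C$ with $\|(\cos c_n[f])^{-1}\|_2\le C$ for all $n$. Then for every $\epsilon>0$ there exist positive integers $N$ and $M$ such that for every $n>N$ there are matrices $\overline{\mathscr R}_n[f],\overline{\mathscr E}_n[f]\in\mathbb{C}^{n\times n}$ with \[ \big[(\cos c_n[f])^{-1}\cos A_n[f]\big]^{*}\big[(\cos c_n[f])^{-1}\cos A_n[f]\big] = I_n+\overline{\mathscr R}_n[f]+\overline{\mathscr E}_n[f],\quad \operatorname{rank}\overline{\mathscr R}_n[f]\le 4M,\quad \|\overline{\mathscr E}_n[f]\|_2\le\epsilon. \]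
   Context: $\mathcal{C}_{2\pi}$ denotes the Banach space of all $2\pi$-periodic continuous complex-valued functions on $\mathbb{R}$ with the supremum norm $\|\cdot\|_\infty$. For $f\in\mathcal{C}_{2\pi}$ its Fourier coefficients are $a_k=\frac{1}{2\pi}\int_{-\pi}^{\pi} f(\theta)e^{-\mathbf{i}k\theta}\,d\theta$, $k\in\mathbb{Z}$. The Toeplitz matrix generated by $f$ is the $n\times n$ matrix $A_n[f]$ whose $(j,k)$ entry is $a_{j-k}$. The optimal circulant preconditioner $c_n[f]$ is the $n\times n$ circulant matrix whose $(j,k)$ entry is $c_{(j-k)\bmod n}$, where $c_k=\frac{(n-k)a_k+k\,a_{k-n}}{n}$ for $0\le k<n$. For a square matrix $X$, $\cos X=\sum_{m\ge0}\frac{(-1)^m}{(2m)!}X^{2m}$; $X^*$ is the conjugate transpose. $I_n$ is the $n\times n$ identity and $\|\cdot\|_2$ is the spectral norm. *)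

theory Defs
  imports "HOL-Analysis.Analysis" "Jordan_Normal_Form.Schur_Decomposition" "Jordan_Normal_Form.DL_Rank"
begin

definition fourier_coeff :: "(real \<Rightarrow> complex) \<Rightarrow> int \<Rightarrow> complex" where
  "fourier_coeff f k = integral {-pi..pi} (\<lambda>\<theta>. f \<theta> * exp (- \<i> * of_int k * of_real \<theta>)) / (2 * of_real pi)"

definition toeplitz :: "(real \<Rightarrow> complex) \<Rightarrow> nat \<Rightarrow> complex mat" where
  "toeplitz f n = mat n n (\<lambda>(j,k). fourier_coeff f (int j - int k))"

definition opt_circ_coeff :: "(real \<Rightarrow> complex) \<Rightarrow> nat \<Rightarrow> nat \<Rightarrow> complex" where
  "opt_circ_coeff f n k = (of_nat (n - k) * fourier_coeff f (int k)
       + of_nat k * fourier_coeff f (int k - int n)) / of_nat n"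

definition opt_circ :: "(real \<Rightarrow> complex) \<Rightarrow> nat \<Rightarrow> complex mat" where
  "opt_circ f n = mat n n (\<lambda>(j,k). opt_circ_coeff f n (nat ((int j - int k) mod int n)))"

definition mat_cos :: "complex mat \<Rightarrow> complex mat" where
  "mat_cos X = mat (dim_row X) (dim_col X)
     (\<lambda>(i,j). \<Sum>m. ((-1) ^ m / of_nat (fact (2 * m))) * (X ^\<^sub>m (2 * m)) $$ (i,j))"

text \<open>Inverse of a square matrix (meaningful when the matrix is invertible).\<close>
definition mat_inv :: "complex mat \<Rightarrow> complex mat" where
  "mat_inv A = (THE B. B \<in> carrier_mat (dim_row A) (dim_row A) \<and>
      A * B = 1\<^sub>m (dim_row A) \<and> B * A = 1\<^sub>m (dim_row A))"

definition vec_norm2 :: "complex vec \<Rightarrow> real" where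
  "vec_norm2 v = sqrt (\<Sum>i<dim_vec v. (cmod (v $ i))\<^sup>2)"

definition spec_norm :: "complex mat \<Rightarrow> real" where
  "spec_norm A = Sup {vec_norm2 (A *\<^sub>v v) | v. v \<in> carrier_vec (dim_col A) \<and> vec_norm2 v \<le> 1}"

definition mat_rank :: "complex mat \<Rightarrow> nat" where
  "mat_rank A = vec_space.rank (dim_row A) A"

end

theory Submission
  imports Defs
begin

text \<open>
  Uniform approximation of \<open>f\<close> by a trigonometric polynomial \<open>p\<close> of degree \<open>D\<close> splits
  \<open>A\<^sub>n[f] - c\<^sub>n[f]\<close> into \<open>A\<^sub>n[p] - c\<^sub>n[p]\<close> and \<open>A\<^sub>n[f - p] - c\<^sub>n[f - p]\<close>. The first vanishes outside
  the first and last \<open>D\<close> rows up to a term of norm \<open>O(1/n)\<close>; the second has norm at most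
  \<open>2 \<parallel>f - p\<parallel>\<^sub>\<infinity>\<close>, because \<open>\<parallel>A\<^sub>n[g]\<parallel>\<^sub>2 \<le> \<parallel>g\<parallel>\<^sub>\<infinity>\<close> by Parseval and \<open>c\<^sub>n[g]\<close> is an average of cyclically
  shifted copies of \<open>A\<^sub>n[g]\<close>. So \<open>A\<^sub>n = c\<^sub>n + R + E\<close> with \<open>rank R\<close> bounded and \<open>\<parallel>E\<parallel>\<^sub>2\<close> small.
  Since \<open>\<parallel>A\<^sub>n\<parallel>\<^sub>2\<close> and \<open>\<parallel>c\<^sub>n\<parallel>\<^sub>2\<close> are bounded by \<open>\<parallel>f\<parallel>\<^sub>\<infinity>\<close>, the cosine series can be truncated after a
  fixed number \<open>K\<close> of terms uniformly in \<open>n\<close>; expanding the even powers of \<open>c\<^sub>n + R + E\<close> then changes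
  the cosine by a matrix of rank at most \<open>2K\<^sup>2 rank R\<close> plus one of norm proportional to \<open>\<parallel>E\<parallel>\<^sub>2\<close>.
  Finally \<open>P = (cos c\<^sub>n)\<^sup>-\<^sup>1 cos A\<^sub>n = I + X\<^sub>R + X\<^sub>E\<close> with \<open>(cos c\<^sub>n)\<^sup>-\<^sup>1\<close> uniformly bounded, and
  \<open>P\<^sup>* P - I\<close> is \<open>X\<^sub>R + X\<^sub>R\<^sup>* P + X\<^sub>E\<^sup>* X\<^sub>R\<close> (rank at most three times that of \<open>R\<close>) plus
  \<open>X\<^sub>E + X\<^sub>E\<^sup>* + X\<^sub>E\<^sup>* X\<^sub>E\<close> (small norm).
\<close>

section \<open>Euclidean and operator norms\<close>

lemma vec_norm2_L2: "vec_norm2 v = L2_set (\<lambda>i. cmod (v $ i)) {..<dim_vec v}"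
  unfolding vec_norm2_def L2_set_def by simp

lemma vec_norm2_nonneg: "0 \<le> vec_norm2 v"
  unfolding vec_norm2_def by (simp add: sum_nonneg)

lemma vec_norm2_add:
  assumes "dim_vec w = dim_vec v"
  shows "vec_norm2 (v + w) \<le> vec_norm2 v + vec_norm2 w"
proof -
  have "vec_norm2 (v + w) = L2_set (\<lambda>i. cmod (v $ i + w $ i)) {..<dim_vec v}"
    unfolding vec_norm2_L2 using assms by (intro L2_set_cong) auto
  also have "\<dots> \<le> L2_set (\<lambda>i. cmod (v $ i) + cmod (w $ i)) {..<dim_vec v}"
    by (intro L2_set_mono) (auto simp: norm_triangle_ineq)
  also have "\<dots> \<le> vec_norm2 v + vec_norm2 w"
    unfolding vec_norm2_L2 using assms by (simp add: L2_set_triangle_ineq)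
  finally show ?thesis .
qed

lemma vec_norm2_smult: "vec_norm2 (c \<cdot>\<^sub>v v) = cmod c * vec_norm2 v"
proof -
  have "vec_norm2 (c \<cdot>\<^sub>v v) = L2_set (\<lambda>i. cmod c * cmod (v $ i)) {..<dim_vec v}"
    unfolding vec_norm2_L2 by (intro L2_set_cong) (auto simp: norm_mult)
  also have "\<dots> = cmod c * vec_norm2 v"
    unfolding vec_norm2_L2 by (simp add: L2_set_right_distrib)
  finally show ?thesis .
qed

lemma vec_norm2_uminus: "vec_norm2 (- v) = vec_norm2 v"
  unfolding vec_norm2_def by simp

lemma vec_norm2_entry: "i < dim_vec v \<Longrightarrow> cmod (v $ i) \<le> vec_norm2 v"
  unfolding vec_norm2_L2 by (rule member_le_L2_set) auto

lemma vec_norm2_zero_iff: "vec_norm2 v = 0 \<longleftrightarrow> (\<forall>i<dim_vec v. v $ i = 0)"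
proof
  assume "vec_norm2 v = 0"
  then show "\<forall>i<dim_vec v. v $ i = 0" using vec_norm2_entry
    by (metis norm_le_zero_iff)
next
  assume "\<forall>i<dim_vec v. v $ i = 0" then show "vec_norm2 v = 0"
    unfolding vec_norm2_def by simp
qed

lemma vec_norm2_unit: "j < n \<Longrightarrow> vec_norm2 (unit_vec n j :: complex vec) = 1"
proof -
  assume j: "j < n"
  have "(\<Sum>i<n. (cmod (unit_vec n j $ i :: complex))\<^sup>2) = (\<Sum>i<n. if i = j then 1 else 0)"
    by (intro sum.cong) (auto simp: unit_vec_def)
  also have "\<dots> = 1" using j by (simp add: sum.delta)
  finally show ?thesis unfolding vec_norm2_def by (simp del: index_unit_vec add: unit_vec_def)
qed

lemma norm_sum_mult_le_L2_set:
  fixes a b :: "nat \<Rightarrow> complex"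
  shows "cmod (\<Sum>i\<in>A. a i * b i) \<le> L2_set (\<lambda>i. cmod (a i)) A * L2_set (\<lambda>i. cmod (b i)) A"
proof -
  have "cmod (\<Sum>i\<in>A. a i * b i) \<le> (\<Sum>i\<in>A. cmod (a i * b i))"
    by (rule norm_sum)
  also have "\<dots> = (\<Sum>i\<in>A. cmod (a i) * cmod (b i))" by (simp add: norm_mult)
  also have "\<dots> = (\<Sum>i\<in>A. \<bar>cmod (a i)\<bar> * \<bar>cmod (b i)\<bar>)" by simp
  also have "\<dots> \<le> L2_set (\<lambda>i. cmod (a i)) A * L2_set (\<lambda>i. cmod (b i)) A"
    by (rule L2_set_mult_ineq)
  finally show ?thesis .
qed

text \<open>Operator-norm estimates are carried by this predicate rather than by \<open>spec_norm\<close>,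
  a supremum, so that they compose under sums and products.\<close>

definition op_bound :: "nat \<Rightarrow> complex mat \<Rightarrow> real \<Rightarrow> bool" where
  "op_bound n A c \<longleftrightarrow> A \<in> carrier_mat n n \<and> (\<forall>v\<in>carrier_vec n. vec_norm2 (A *\<^sub>v v) \<le> c * vec_norm2 v)"

lemma op_boundI: "A \<in> carrier_mat n n \<Longrightarrow> (\<And>v. v \<in> carrier_vec n \<Longrightarrow> vec_norm2 (A *\<^sub>v v) \<le> c * vec_norm2 v) \<Longrightarrow> op_bound n A c"
  unfolding op_bound_def by auto

lemma op_boundD: "op_bound n A c \<Longrightarrow> v \<in> carrier_vec n \<Longrightarrow> vec_norm2 (A *\<^sub>v v) \<le> c * vec_norm2 v"
  and op_bound_carrier: "op_bound n A c \<Longrightarrow> A \<in> carrier_mat n n"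
  unfolding op_bound_def by auto

lemma op_bound_mono: assumes "op_bound n A c" "c \<le> d" shows "op_bound n A d"
proof (rule op_boundI)
  show "A \<in> carrier_mat n n" using op_bound_carrier[OF assms(1)] .
  fix v :: "complex vec" assume v: "v \<in> carrier_vec n"
  have "vec_norm2 (A *\<^sub>v v) \<le> c * vec_norm2 v" using op_boundD[OF assms(1) v] .
  also have "\<dots> \<le> d * vec_norm2 v" by (rule mult_right_mono) (use assms vec_norm2_nonneg in auto)
  finally show "vec_norm2 (A *\<^sub>v v) \<le> d * vec_norm2 v" .
qed

lemma op_bound_add: assumes "op_bound n A a" "op_bound n B b" shows "op_bound n (A + B) (a + b)"
proof (rule op_boundI)
  show "A + B \<in> carrier_mat n n" using assms by (intro add_carrier_mat op_bound_carrier)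
  fix v :: "complex vec" assume v: "v \<in> carrier_vec n"
  have "(A + B) *\<^sub>v v = A *\<^sub>v v + B *\<^sub>v v"
    using assms op_bound_carrier v add_mult_distrib_mat_vec by blast
  moreover have "dim_vec (B *\<^sub>v v) = dim_vec (A *\<^sub>v v)" using assms op_bound_carrier
    by (metis carrier_matD(1) dim_mult_mat_vec)
  ultimately have "vec_norm2 ((A + B) *\<^sub>v v) \<le> vec_norm2 (A *\<^sub>v v) + vec_norm2 (B *\<^sub>v v)"
    using vec_norm2_add by simp
  also have "\<dots> \<le> a * vec_norm2 v + b * vec_norm2 v" by (intro add_mono op_boundD[OF assms(1) v] op_boundD[OF assms(2) v])
  finally show "vec_norm2 ((A + B) *\<^sub>v v) \<le> (a + b) * vec_norm2 v" by (simp add: algebra_simps)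
qed

lemma op_bound_smult: assumes "op_bound n A a" shows "op_bound n (c \<cdot>\<^sub>m A) (cmod c * a)"
proof (rule op_boundI)
  show "c \<cdot>\<^sub>m A \<in> carrier_mat n n" using assms by (intro smult_carrier_mat op_bound_carrier)
  fix v :: "complex vec" assume v: "v \<in> carrier_vec n"
  have "(c \<cdot>\<^sub>m A) *\<^sub>v v = c \<cdot>\<^sub>v (A *\<^sub>v v)"
    using op_bound_carrier[OF assms] v
    by (intro eq_vecI) (auto simp: mult_mat_vec_def scalar_prod_def sum_distrib_left mult.assoc)
  then show "vec_norm2 ((c \<cdot>\<^sub>m A) *\<^sub>v v) \<le> (cmod c * a) * vec_norm2 v"
    using op_boundD[OF assms v] by (simp add: vec_norm2_smult mult.assoc mult_left_mono)
qed

lemma op_bound_uminus: assumes "op_bound n A a" shows "op_bound n (- A) a"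
proof (rule op_boundI)
  show "- A \<in> carrier_mat n n" using assms by (intro uminus_carrier_mat op_bound_carrier)
  fix v :: "complex vec" assume v: "v \<in> carrier_vec n"
  have "(- A) *\<^sub>v v = - (A *\<^sub>v v)"
    using op_bound_carrier[OF assms] v by (intro uminus_mult_mat_vec) auto
  then show "vec_norm2 ((- A) *\<^sub>v v) \<le> a * vec_norm2 v"
    using op_boundD[OF assms v] by (simp add: vec_norm2_uminus)
qed

lemma op_bound_minus: assumes "op_bound n A a" "op_bound n B b" shows "op_bound n (A - B) (a + b)"
proof -
  have "A - B = A + (- B)" using op_bound_carrier[OF assms(1)] op_bound_carrier[OF assms(2)] by (rule minus_add_uminus_mat)
  then show ?thesis using op_bound_add[OF assms(1) op_bound_uminus[OF assms(2)]] by simp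
qed

lemma op_bound_mult:
  assumes "op_bound n A a" "op_bound n B b" "0 \<le> a"
  shows "op_bound n (A * B) (a * b)"
proof (rule op_boundI)
  show "A * B \<in> carrier_mat n n" using mult_carrier_mat[OF op_bound_carrier[OF assms(1)] op_bound_carrier[OF assms(2)]] .
  fix v :: "complex vec" assume v: "v \<in> carrier_vec n"
  have "(A * B) *\<^sub>v v = A *\<^sub>v (B *\<^sub>v v)"
    using assoc_mult_mat_vec[OF op_bound_carrier[OF assms(1)] op_bound_carrier[OF assms(2)] v] .
  moreover have "B *\<^sub>v v \<in> carrier_vec n" using mult_mat_vec_carrier[OF op_bound_carrier[OF assms(2)] v] .
  ultimately have "vec_norm2 ((A * B) *\<^sub>v v) \<le> a * vec_norm2 (B *\<^sub>v v)" using op_boundD[OF assms(1)] by simp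
  also have "\<dots> \<le> a * (b * vec_norm2 v)" using op_boundD[OF assms(2) v] assms(3) by (simp add: mult_left_mono)
  finally show "vec_norm2 ((A * B) *\<^sub>v v) \<le> (a * b) * vec_norm2 v" by simp
qed

lemma op_bound_one: "op_bound n (1\<^sub>m n) 1"
  by (rule op_boundI) auto

lemma op_bound_zero: "op_bound n (0\<^sub>m n n) 0"
proof (rule op_boundI)
  fix v :: "complex vec" assume v: "v \<in> carrier_vec n"
  have "0\<^sub>m n n *\<^sub>v v = 0\<^sub>v n" using v by (intro eq_vecI) (auto simp: mult_mat_vec_def scalar_prod_def)
  moreover have "vec_norm2 (0\<^sub>v n) = 0" using vec_norm2_zero_iff[of "0\<^sub>v n"] by simp
  ultimately show "vec_norm2 (0\<^sub>m n n *\<^sub>v v) \<le> 0 * vec_norm2 v" by simp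
qed auto

lemma op_bound_entry: assumes "op_bound n A a" "i < n" "j < n" shows "cmod (A $$ (i, j)) \<le> a"
proof -
  have A: "A \<in> carrier_mat n n" using op_bound_carrier[OF assms(1)] .
  have "(A *\<^sub>v unit_vec n j) $ i = A $$ (i, j)" using A assms
  proof -
    have "(A *\<^sub>v unit_vec n j) $ i = (\<Sum>l\<in>{0..<n}. A $$ (i, l) * (if l = j then 1 else 0))"
      using A assms by (simp add: mult_mat_vec_def scalar_prod_def unit_vec_def Matrix.row_def)
    also have "\<dots> = (\<Sum>l\<in>{0..<n}. if l = j then A $$ (i, l) else 0)" by (intro sum.cong) auto
    also have "\<dots> = A $$ (i, j)" using assms by (simp add: sum.delta)
    finally show ?thesis .
  qed
  then have "cmod (A $$ (i, j)) \<le> vec_norm2 (A *\<^sub>v unit_vec n j)"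
    using vec_norm2_entry[of i "A *\<^sub>v unit_vec n j"] A assms by simp
  also have "\<dots> \<le> a" using op_boundD[OF assms(1), of "unit_vec n j"] vec_norm2_unit[OF assms(3)] by simp
  finally show ?thesis .
qed

lemma op_bound_pow: assumes "op_bound n A a" "0 \<le> a" shows "op_bound n (A ^\<^sub>m k) (a ^ k)"
proof (induction k)
  case 0 have "dim_row A = n" using op_bound_carrier[OF assms(1)] by simp
  then show ?case using op_bound_one by simp
next
  case (Suc k)
  have "op_bound n (A ^\<^sub>m k * A) (a ^ k * a)" by (rule op_bound_mult[OF Suc assms(1)]) (use assms in simp)
  then show ?case by (simp add: mult.commute)
qed

lemma mult_mat_vec_index_sum: assumes "A \<in> carrier_mat n m" "v \<in> carrier_vec m" "i < n"
  shows "(A *\<^sub>v v) $ i = (\<Sum>j<m. A $$ (i, j) * v $ j)"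
  using assms by (auto simp: mult_mat_vec_def scalar_prod_def atLeast0LessThan)

lemma times_mat_index_sum:
  assumes "A \<in> carrier_mat n m" "B \<in> carrier_mat m k" "i < n" "j < k"
  shows "(A * B) $$ (i, j) = (\<Sum>l<m. A $$ (i, l) * B $$ (l, j))"
  using assms by (auto simp: scalar_prod_def atLeast0LessThan)

lemma mat_adjoint_carrier: "A \<in> carrier_mat n n \<Longrightarrow> mat_adjoint A \<in> carrier_mat n n"
  unfolding mat_adjoint_def by auto

lemma mat_adjoint_index: assumes "A \<in> carrier_mat n n" "i < n" "j < n"
  shows "mat_adjoint A $$ (i, j) = cnj (A $$ (j, i))"
proof -
  have "mat_adjoint A $$ (i, j) = (map conjugate (cols A) ! i) $ j"
    unfolding mat_adjoint_def using assms by (intro mat_of_rows_index) auto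
  also have "\<dots> = cnj (A $$ (j, i))" using assms by auto
  finally show ?thesis .
qed

lemma mat_adjoint_add:
  fixes A B :: "complex mat" assumes "A \<in> carrier_mat n n" "B \<in> carrier_mat n n"
  shows "mat_adjoint (A + B) = mat_adjoint A + mat_adjoint B"
proof -
  have AB: "A + B \<in> carrier_mat n n" using assms by simp
  have c: "mat_adjoint (A + B) \<in> carrier_mat n n" "mat_adjoint A \<in> carrier_mat n n" "mat_adjoint B \<in> carrier_mat n n"
    using mat_adjoint_carrier[OF AB] mat_adjoint_carrier[OF assms(1)] mat_adjoint_carrier[OF assms(2)] by auto
  show ?thesis
  proof (rule eq_matI)
    fix i j assume "i < dim_row (mat_adjoint A + mat_adjoint B)" "j < dim_col (mat_adjoint A + mat_adjoint B)"
    then have ij: "i < n" "j < n" using c by auto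
    show "mat_adjoint (A + B) $$ (i, j) = (mat_adjoint A + mat_adjoint B) $$ (i, j)"
      using ij c assms mat_adjoint_index[OF AB ij] mat_adjoint_index[OF assms(1) ij] mat_adjoint_index[OF assms(2) ij] by simp
  qed (use c in auto)
qed

lemma mat_adjoint_one: "mat_adjoint (1\<^sub>m n :: complex mat) = 1\<^sub>m n"
proof -
  have c: "mat_adjoint (1\<^sub>m n :: complex mat) \<in> carrier_mat n n" by (rule mat_adjoint_carrier) simp
  show ?thesis
  proof (rule eq_matI)
    fix i j assume "i < dim_row (1\<^sub>m n :: complex mat)" "j < dim_col (1\<^sub>m n :: complex mat)"
    then have ij: "i < n" "j < n" by auto
    show "mat_adjoint (1\<^sub>m n) $$ (i, j) = (1\<^sub>m n :: complex mat) $$ (i, j)"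
      using mat_adjoint_index[of "1\<^sub>m n :: complex mat" n i j] ij by auto
  qed (use c in auto)
qed

lemma op_bound_limit:
  assumes M: "M \<in> carrier_mat n n" and X: "\<And>L. X L \<in> carrier_mat n n"
    and lim: "\<And>i j. i < n \<Longrightarrow> j < n \<Longrightarrow> (\<lambda>L. X L $$ (i, j)) \<longlonglongrightarrow> M $$ (i, j)"
    and bound: "eventually (\<lambda>L. op_bound n (X L) c) sequentially"
  shows "op_bound n M c"
proof (rule op_boundI[OF M])
  fix v :: "complex vec" assume v: "v \<in> carrier_vec n"
  have lim_i: "(\<lambda>L. (X L *\<^sub>v v) $ i) \<longlonglongrightarrow> (M *\<^sub>v v) $ i" if i: "i < n" for i
    unfolding mult_mat_vec_index_sum[OF X v i] mult_mat_vec_index_sum[OF M v i]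
    by (intro tendsto_sum tendsto_mult tendsto_const lim i) auto
  have dX: "dim_vec (X L *\<^sub>v v) = n" for L using X[of L] by simp
  have dM: "dim_vec (M *\<^sub>v v) = n" using M by simp
  have "(\<lambda>L. vec_norm2 (X L *\<^sub>v v)) \<longlonglongrightarrow> vec_norm2 (M *\<^sub>v v)"
    unfolding vec_norm2_def dX dM by (intro tendsto_real_sqrt tendsto_sum tendsto_power tendsto_norm lim_i) auto
  moreover have "\<exists>N. \<forall>L\<ge>N. vec_norm2 (X L *\<^sub>v v) \<le> c * vec_norm2 v"
    using bound op_boundD[OF _ v] unfolding eventually_sequentially by blast
  ultimately show "vec_norm2 (M *\<^sub>v v) \<le> c * vec_norm2 v" by (rule LIMSEQ_le_const2)
qed

lemma spec_norm_le_op_bound: assumes "op_bound n A c" "0 \<le> c" shows "spec_norm A \<le> c"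
proof -
  have A: "A \<in> carrier_mat n n" using op_bound_carrier[OF assms(1)] .
  let ?S = "{vec_norm2 (A *\<^sub>v v) | v. v \<in> carrier_vec (dim_col A) \<and> vec_norm2 v \<le> 1}"
  have ne: "?S \<noteq> {}"
  proof -
    have "vec_norm2 (0\<^sub>v n :: complex vec) = 0" using vec_norm2_zero_iff[of "0\<^sub>v n"] by simp
    then have "vec_norm2 (A *\<^sub>v 0\<^sub>v n) \<in> ?S" using A by fastforce
    then show ?thesis by blast
  qed
  show ?thesis unfolding spec_norm_def
  proof (rule cSup_least[OF ne])
    fix x assume "x \<in> ?S"
    then obtain v where v: "v \<in> carrier_vec n" "vec_norm2 v \<le> 1" "x = vec_norm2 (A *\<^sub>v v)" using A by auto
    have "x \<le> c * vec_norm2 v" using op_boundD[OF assms(1) v(1)] v(3) by simp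
    also have "\<dots> \<le> c" using v(2) assms(2) by (simp add: mult_left_le)
    finally show "x \<le> c" .
  qed
qed

lemma norm_mult_mat_vec_le_entry_sum:
  assumes A: "A \<in> carrier_mat n n" and v: "v \<in> carrier_vec n"
  shows "vec_norm2 (A *\<^sub>v v) \<le> (\<Sum>i<n. \<Sum>j<n. cmod (A $$ (i, j))) * vec_norm2 v"
proof -
  have d: "dim_vec (A *\<^sub>v v) = n" using A by simp
  have "vec_norm2 (A *\<^sub>v v) \<le> (\<Sum>i<n. cmod ((A *\<^sub>v v) $ i))"
    unfolding vec_norm2_L2 d by (rule L2_set_le_sum) simp
  also have "\<dots> \<le> (\<Sum>i<n. \<Sum>j<n. cmod (A $$ (i, j)) * vec_norm2 v)"
  proof (rule sum_mono)
    fix i assume i: "i \<in> {..<n}"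
    have "cmod ((A *\<^sub>v v) $ i) = cmod (\<Sum>j<n. A $$ (i, j) * v $ j)" using mult_mat_vec_index_sum[OF A v] i by simp
    also have "\<dots> \<le> (\<Sum>j<n. cmod (A $$ (i, j) * v $ j))" by (rule norm_sum)
    also have "\<dots> \<le> (\<Sum>j<n. cmod (A $$ (i, j)) * vec_norm2 v)"
    proof (rule sum_mono)
      fix j assume j: "j \<in> {..<n}"
      have "cmod (v $ j) \<le> vec_norm2 v" using v j by (intro vec_norm2_entry) auto
      then show "cmod (A $$ (i, j) * v $ j) \<le> cmod (A $$ (i, j)) * vec_norm2 v"
        by (simp add: norm_mult mult_left_mono)
    qed
    finally show "cmod ((A *\<^sub>v v) $ i) \<le> (\<Sum>j<n. cmod (A $$ (i, j)) * vec_norm2 v)" .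
  qed
  also have "\<dots> = (\<Sum>i<n. \<Sum>j<n. cmod (A $$ (i, j))) * vec_norm2 v"
    by (simp add: sum_distrib_right)
  finally show ?thesis .
qed

lemma op_bound_spec_norm: assumes A: "A \<in> carrier_mat n n" shows "op_bound n A (spec_norm A)"
proof (rule op_boundI[OF A])
  define K where "K = (\<Sum>i<n. \<Sum>j<n. cmod (A $$ (i, j)))"
  let ?S = "{vec_norm2 (A *\<^sub>v v) | v. v \<in> carrier_vec (dim_col A) \<and> vec_norm2 v \<le> 1}"
  have bdd: "bdd_above ?S"
  proof (rule bdd_aboveI)
    fix x assume "x \<in> ?S"
    then obtain v where v: "v \<in> carrier_vec n" "vec_norm2 v \<le> 1" "x = vec_norm2 (A *\<^sub>v v)" using A by auto
    have "x \<le> K * vec_norm2 v" using norm_mult_mat_vec_le_entry_sum[OF A v(1)] v(3) K_def by simp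
    also have "\<dots> \<le> K" using v(2) by (simp add: K_def mult_left_le sum_nonneg)
    finally show "x \<le> K" .
  qed
  fix v :: "complex vec" assume v: "v \<in> carrier_vec n"
  show "vec_norm2 (A *\<^sub>v v) \<le> spec_norm A * vec_norm2 v"
  proof (cases "vec_norm2 v = 0")
    case True
    then have "\<forall>i<n. v $ i = 0" using vec_norm2_zero_iff v by auto
    then have "\<forall>i<n. (A *\<^sub>v v) $ i = 0" using mult_mat_vec_index_sum[OF A v] by simp
    then have "vec_norm2 (A *\<^sub>v v) = 0" using vec_norm2_zero_iff A by simp
    then show ?thesis using True by simp
  next
    case False
    then have pos: "0 < vec_norm2 v" using vec_norm2_nonneg by (simp add: order_less_le)
    define u where "u = complex_of_real (1 / vec_norm2 v) \<cdot>\<^sub>v v"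
    have u: "u \<in> carrier_vec n" using v u_def by simp
    have nu: "vec_norm2 u = 1" using pos by (simp add: u_def vec_norm2_smult norm_divide)
    have "vec_norm2 (A *\<^sub>v u) \<in> ?S" using u nu A by fastforce
    then have le: "vec_norm2 (A *\<^sub>v u) \<le> spec_norm A" unfolding spec_norm_def using bdd by (rule cSup_upper)
    have "A *\<^sub>v u = complex_of_real (1 / vec_norm2 v) \<cdot>\<^sub>v (A *\<^sub>v v)" unfolding u_def using A v by (rule mult_mat_vec)
    then have "vec_norm2 (A *\<^sub>v u) = cmod (complex_of_real (1 / vec_norm2 v)) * vec_norm2 (A *\<^sub>v v)"
      by (simp only: vec_norm2_smult)
    moreover have "cmod (complex_of_real (1 / vec_norm2 v)) = 1 / vec_norm2 v"
      using pos by (simp add: norm_divide)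
    ultimately have "vec_norm2 (A *\<^sub>v u) = vec_norm2 (A *\<^sub>v v) / vec_norm2 v" by simp
    then show ?thesis using le pos by (simp add: divide_le_eq)
  qed
qed

lemma op_bound_of_spec_norm_le:
  assumes "A \<in> carrier_mat n n" "spec_norm A \<le> c" shows "op_bound n A c"
  using op_bound_mono[OF op_bound_spec_norm] assms .

lemma mat_adjoint_mult_vec_index:
  assumes A: "A \<in> carrier_mat n n" and v: "v \<in> carrier_vec n" and i: "i < n"
  shows "(mat_adjoint A *\<^sub>v v) $ i = (\<Sum>j<n. cnj (A $$ (j, i)) * v $ j)"
  using mult_mat_vec_index_sum[OF mat_adjoint_carrier[OF A] v i] mat_adjoint_index[OF A] i by simp

lemma vec_norm2_square: "complex_of_real ((vec_norm2 w)\<^sup>2) = (\<Sum>i<dim_vec w. cnj (w $ i) * w $ i)"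
proof -
  have "(vec_norm2 w)\<^sup>2 = (\<Sum>i<dim_vec w. (cmod (w $ i))\<^sup>2)" unfolding vec_norm2_def
    by (simp add: sum_nonneg)
  then have "complex_of_real ((vec_norm2 w)\<^sup>2) = (\<Sum>i<dim_vec w. complex_of_real ((cmod (w $ i))\<^sup>2))"
    by (simp only: of_real_sum)
  also have "\<dots> = (\<Sum>i<dim_vec w. cnj (w $ i) * w $ i)"
    by (intro sum.cong refl) (subst complex_norm_square, rule mult.commute)
  finally show ?thesis .
qed

lemma op_bound_adjoint: assumes "op_bound n A a" shows "op_bound n (mat_adjoint A) a"
proof (rule op_boundI)
  have A: "A \<in> carrier_mat n n" using op_bound_carrier[OF assms] .
  show "mat_adjoint A \<in> carrier_mat n n" using mat_adjoint_carrier[OF A] .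
  fix v :: "complex vec" assume v: "v \<in> carrier_vec n"
  define w where "w = mat_adjoint A *\<^sub>v v"
  have w: "w \<in> carrier_vec n" unfolding w_def using mat_adjoint_carrier[OF A] v by simp
  have "complex_of_real ((vec_norm2 w)\<^sup>2) = (\<Sum>i<n. cnj (w $ i) * w $ i)"
    using vec_norm2_square[of w] w by simp
  also have "\<dots> = (\<Sum>i<n. \<Sum>j<n. cnj (w $ i) * (cnj (A $$ (j, i)) * v $ j))"
    unfolding w_def using mat_adjoint_mult_vec_index[OF A v] by (simp add: sum_distrib_left)
  also have "\<dots> = (\<Sum>j<n. \<Sum>i<n. cnj (w $ i) * (cnj (A $$ (j, i)) * v $ j))"
    by (rule sum.swap)
  also have "\<dots> = (\<Sum>j<n. v $ j * cnj ((A *\<^sub>v w) $ j))"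
    using mult_mat_vec_index_sum[OF A w] by (simp add: sum_distrib_left cnj_sum mult_ac)
  finally have eq: "complex_of_real ((vec_norm2 w)\<^sup>2) = (\<Sum>j<n. v $ j * cnj ((A *\<^sub>v w) $ j))" .
  have "(vec_norm2 w)\<^sup>2 = cmod (complex_of_real ((vec_norm2 w)\<^sup>2))" by (simp only: norm_of_real abs_of_nonneg zero_le_power2)
  also have "\<dots> \<le> L2_set (\<lambda>j. cmod (v $ j)) {..<n} * L2_set (\<lambda>j. cmod (cnj ((A *\<^sub>v w) $ j))) {..<n}"
    unfolding eq by (rule norm_sum_mult_le_L2_set)
  also have "\<dots> = vec_norm2 v * vec_norm2 (A *\<^sub>v w)"
    unfolding vec_norm2_L2 using v w A by simp
  also have "\<dots> \<le> vec_norm2 v * (a * vec_norm2 w)"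
    using op_boundD[OF assms w] by (simp add: mult_left_mono vec_norm2_nonneg)
  finally have "vec_norm2 w * vec_norm2 w \<le> (a * vec_norm2 v) * vec_norm2 w"
    by (simp add: power2_eq_square mult_ac)
  then have "vec_norm2 w \<le> a * vec_norm2 v"
  proof (cases "vec_norm2 w = 0")
    case True
    have "0 \<le> a * vec_norm2 v" using op_boundD[OF assms v] vec_norm2_nonneg[of "A *\<^sub>v v"] by linarith
    then show ?thesis using True by simp
  next
    case False
    then have "0 < vec_norm2 w" using vec_norm2_nonneg[of w] by linarith
    then show ?thesis using \<open>vec_norm2 w * vec_norm2 w \<le> (a * vec_norm2 v) * vec_norm2 w\<close>
      by (rule mult_right_le_imp_le[rotated])
  qed
  then show "vec_norm2 (mat_adjoint A *\<^sub>v v) \<le> a * vec_norm2 v" unfolding w_def .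
qed

lemma sum_lessThan_add_split:
  fixes r s :: nat
  shows "(\<Sum>k<r+s. f k :: 'a :: comm_monoid_add) = (\<Sum>k<r. f k) + (\<Sum>k<s. f (k + r))"
  apply (induction s)
   apply (simp_all add: add.commute add.left_commute)
  done

section \<open>Sums of few outer products\<close>

text \<open>Rank is controlled through explicit outer-product expansions \<open>X = (\<Sum>k<r'. u\<^sub>k v\<^sub>k\<^sup>T)\<close>,
  which are stable under sums and one-sided products without any linear algebra.\<close>

definition low_rank :: "nat \<Rightarrow> nat \<Rightarrow> complex mat \<Rightarrow> bool" where
  "low_rank n r X \<longleftrightarrow> X \<in> carrier_mat n n \<and>
     (\<exists>U V r'. r' \<le> r \<and> (\<forall>i<n. \<forall>j<n. X $$ (i, j) = (\<Sum>k<r'. U k i * V k j)))"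

lemma low_rank_carrier: "low_rank n r X \<Longrightarrow> X \<in> carrier_mat n n"
  unfolding low_rank_def by auto

lemma low_rank_mono: "low_rank n r X \<Longrightarrow> r \<le> s \<Longrightarrow> low_rank n s X"
  unfolding low_rank_def by (meson order_trans)

lemma rank_sum_outer_products_le: "vec_space.rank n (mat n n (\<lambda>(i, j). \<Sum>k<r. U k i * V k j) :: complex mat) \<le> r"
proof (induction r)
  case 0
  have "mat n n (\<lambda>(i, j). \<Sum>k<0. U k i * V k j) = (0\<^sub>m n n :: complex mat)"
    by (intro eq_matI) auto
  show ?case unfolding \<open>mat n n (\<lambda>(i, j). \<Sum>k<0. U k i * V k j) = (0\<^sub>m n n :: complex mat)\<close>
    by (simp only: vec_space.rank_0I[of n n] le_refl)
next
  case (Suc r)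
  have eq: "mat n n (\<lambda>(i, j). \<Sum>k<Suc r. U k i * V k j) =
     mat n n (\<lambda>(i, j). \<Sum>k<r. U k i * V k j) + (mat n n (\<lambda>(i, j). U r i * V r j) :: complex mat)"
    by (intro eq_matI) auto
  have "vec_space.rank n (mat n n (\<lambda>(i, j). \<Sum>k<r. U k i * V k j) + (mat n n (\<lambda>(i, j). U r i * V r j) :: complex mat))
      \<le> vec_space.rank n (mat n n (\<lambda>(i, j). \<Sum>k<r. U k i * V k j) :: complex mat) + vec_space.rank n (mat n n (\<lambda>(i, j). U r i * V r j) :: complex mat)"
    by (rule vec_space.rank_subadditive) auto
  moreover have "vec_space.rank n (mat n n (\<lambda>(i, j). U r i * V r j) :: complex mat) \<le> 1"
    by (rule vec_space.rank_le_1_product_entries[where f="U r" and g="V r"]) auto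
  ultimately show ?case using Suc eq by simp
qed

lemma mat_rank_le_low_rank: assumes "low_rank n r X" shows "mat_rank X \<le> r"
proof -
  obtain U V r' where r': "r' \<le> r" and X: "X \<in> carrier_mat n n"
     and e: "\<forall>i<n. \<forall>j<n. X $$ (i, j) = (\<Sum>k<r'. U k i * V k j)"
    using assms unfolding low_rank_def by blast
  have "X = mat n n (\<lambda>(i, j). \<Sum>k<r'. U k i * V k j)" using X e by (intro eq_matI) auto
  then have "mat_rank X = vec_space.rank n (mat n n (\<lambda>(i, j). \<Sum>k<r'. U k i * V k j) :: complex mat)"
    unfolding mat_rank_def using X by simp
  also have "\<dots> \<le> r'" by (rule rank_sum_outer_products_le)
  finally show ?thesis using r' by simp
qed

lemma low_rank_zero: "low_rank n r (0\<^sub>m n n)"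
  unfolding low_rank_def by (rule conjI, simp, rule exI[of _ "\<lambda>_ _. 0"], rule exI[of _ "\<lambda>_ _. 0"], rule exI[of _ 0]) auto

lemma low_rank_add: assumes "low_rank n r X" "low_rank n s Y" shows "low_rank n (r + s) (X + Y)"
proof -
  obtain U V r' where r': "r' \<le> r" and X: "X \<in> carrier_mat n n"
     and e: "\<forall>i<n. \<forall>j<n. X $$ (i, j) = (\<Sum>k<r'. U k i * V k j)"
    using assms(1) unfolding low_rank_def by blast
  obtain U2 V2 s' where s': "s' \<le> s" and Y: "Y \<in> carrier_mat n n"
     and e2: "\<forall>i<n. \<forall>j<n. Y $$ (i, j) = (\<Sum>k<s'. U2 k i * V2 k j)"
    using assms(2) unfolding low_rank_def by blast
  define U' where "U' k = (if k < r' then U k else U2 (k - r'))" for k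
  define V' where "V' k = (if k < r' then V k else V2 (k - r'))" for k
  have "\<forall>i<n. \<forall>j<n. (X + Y) $$ (i, j) = (\<Sum>k<r'+s'. U' k i * V' k j)"
  proof (intro allI impI)
    fix i j assume ij: "i < n" "j < n"
    have "(\<Sum>k<r'+s'. U' k i * V' k j) = (\<Sum>k<r'. U' k i * V' k j) + (\<Sum>k<s'. U' (k + r') i * V' (k + r') j)"
      by (rule sum_lessThan_add_split)
    also have "\<dots> = X $$ (i, j) + Y $$ (i, j)" using e e2 ij by (simp add: U'_def V'_def)
    finally show "(X + Y) $$ (i, j) = (\<Sum>k<r'+s'. U' k i * V' k j)" using X Y ij by simp
  qed
  then show ?thesis unfolding low_rank_def using X Y r' s' by (intro conjI exI[of _ U'] exI[of _ V'] exI[of _ "r'+s'"]) auto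
qed

lemma low_rank_mult_left:
  assumes "low_rank n r X" "Y \<in> carrier_mat n n"
  shows "low_rank n r (Y * X)"
proof -
  obtain U V r' where r': "r' \<le> r" and X: "X \<in> carrier_mat n n"
     and e: "\<forall>i<n. \<forall>j<n. X $$ (i, j) = (\<Sum>k<r'. U k i * V k j)"
    using assms(1) unfolding low_rank_def by blast
  define U' where "U' k i = (\<Sum>l<n. Y $$ (i, l) * U k l)" for k i
  have "\<forall>i<n. \<forall>j<n. (Y * X) $$ (i, j) = (\<Sum>k<r'. U' k i * V k j)"
  proof (intro allI impI)
    fix i j assume ij: "i < n" "j < n"
    have "(Y * X) $$ (i, j) = (\<Sum>l<n. Y $$ (i, l) * X $$ (l, j))" using times_mat_index_sum[OF assms(2) X ij] .
    also have "\<dots> = (\<Sum>l<n. \<Sum>k<r'. Y $$ (i, l) * (U k l * V k j))" using e ij by (simp add: sum_distrib_left)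
    also have "\<dots> = (\<Sum>k<r'. \<Sum>l<n. Y $$ (i, l) * (U k l * V k j))" by (rule sum.swap)
    also have "\<dots> = (\<Sum>k<r'. U' k i * V k j)" by (simp add: U'_def sum_distrib_right mult.assoc)
    finally show "(Y * X) $$ (i, j) = (\<Sum>k<r'. U' k i * V k j)" .
  qed
  then show ?thesis unfolding low_rank_def using X assms(2) r' by (intro conjI exI[of _ U'] exI[of _ V] exI[of _ r']) auto
qed

lemma low_rank_mult_right:
  assumes "low_rank n r X" "Y \<in> carrier_mat n n"
  shows "low_rank n r (X * Y)"
proof -
  obtain U V r' where r': "r' \<le> r" and X: "X \<in> carrier_mat n n"
     and e: "\<forall>i<n. \<forall>j<n. X $$ (i, j) = (\<Sum>k<r'. U k i * V k j)"
    using assms(1) unfolding low_rank_def by blast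
  define V' where "V' k j = (\<Sum>l<n. V k l * Y $$ (l, j))" for k j
  have "\<forall>i<n. \<forall>j<n. (X * Y) $$ (i, j) = (\<Sum>k<r'. U k i * V' k j)"
  proof (intro allI impI)
    fix i j assume ij: "i < n" "j < n"
    have "(X * Y) $$ (i, j) = (\<Sum>l<n. X $$ (i, l) * Y $$ (l, j))" using times_mat_index_sum[OF X assms(2) ij] .
    also have "\<dots> = (\<Sum>l<n. \<Sum>k<r'. U k i * (V k l * Y $$ (l, j)))" using e ij by (simp add: sum_distrib_right mult.assoc)
    also have "\<dots> = (\<Sum>k<r'. \<Sum>l<n. U k i * (V k l * Y $$ (l, j)))" by (rule sum.swap)
    also have "\<dots> = (\<Sum>k<r'. U k i * V' k j)" by (simp add: V'_def sum_distrib_left)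
    finally show "(X * Y) $$ (i, j) = (\<Sum>k<r'. U k i * V' k j)" .
  qed
  then show ?thesis unfolding low_rank_def using X assms(2) r' by (intro conjI exI[of _ U] exI[of _ V'] exI[of _ r']) auto
qed

lemma low_rank_adjoint: assumes "low_rank n r X" shows "low_rank n r (mat_adjoint X)"
proof -
  obtain U V r' where r': "r' \<le> r" and X: "X \<in> carrier_mat n n"
     and e: "\<forall>i<n. \<forall>j<n. X $$ (i, j) = (\<Sum>k<r'. U k i * V k j)"
    using assms(1) unfolding low_rank_def by blast
  have "\<forall>i<n. \<forall>j<n. mat_adjoint X $$ (i, j) = (\<Sum>k<r'. cnj (V k i) * cnj (U k j))"
    using e mat_adjoint_index[OF X] by (simp add: cnj_sum mult.commute)
  then show ?thesis unfolding low_rank_def using mat_adjoint_carrier[OF X] r'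
    by (intro conjI exI[of _ "\<lambda>k i. cnj (V k i)"] exI[of _ "\<lambda>k j. cnj (U k j)"] exI[of _ r']) auto
qed

lemma low_rank_smult: assumes "low_rank n r X" shows "low_rank n r (c \<cdot>\<^sub>m X)"
proof -
  obtain U V r' where r': "r' \<le> r" and X: "X \<in> carrier_mat n n"
     and e: "\<forall>i<n. \<forall>j<n. X $$ (i, j) = (\<Sum>k<r'. U k i * V k j)"
    using assms(1) unfolding low_rank_def by blast
  have "\<forall>i<n. \<forall>j<n. (c \<cdot>\<^sub>m X) $$ (i, j) = (\<Sum>k<r'. (c * U k i) * V k j)"
    using e X by (simp add: sum_distrib_left mult.assoc)
  then show ?thesis unfolding low_rank_def using X r'
    by (intro conjI exI[of _ "\<lambda>k i. c * U k i"] exI[of _ V] exI[of _ r']) auto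
qed

lemma low_rank_outside_rows: assumes R: "R \<in> carrier_mat n n" and Dn: "2 * D \<le> n"
  and z: "\<And>j k. j < n \<Longrightarrow> k < n \<Longrightarrow> D \<le> j \<Longrightarrow> j < n - D \<Longrightarrow> R $$ (j, k) = 0"
  shows "low_rank n (2 * D) R"
proof -
  define Rt where "Rt = mat n n (\<lambda>(j, k). \<Sum>m<D. (if j = m then 1 else 0) * R $$ (m, k))"
  define Rb where "Rb = mat n n (\<lambda>(j, k). \<Sum>m<D. (if j = n - D + m then 1 else 0) * R $$ (n - D + m, k))"
  have Lt: "low_rank n D Rt" unfolding low_rank_def Rt_def
    by (intro conjI exI[of _ "\<lambda>m j. if j = m then 1 else 0"] exI[of _ "\<lambda>m k. R $$ (m, k)"] exI[of _ D]) auto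
  have Lb: "low_rank n D Rb" unfolding low_rank_def Rb_def
    by (intro conjI exI[of _ "\<lambda>m j. if j = n - D + m then 1 else 0"] exI[of _ "\<lambda>m k. R $$ (n - D + m, k)"] exI[of _ D]) auto
  have "R = Rt + Rb"
  proof (rule eq_matI)
    fix j k assume j: "j < dim_row (Rt + Rb)" and k: "k < dim_col (Rt + Rb)"
    then have jk: "j < n" "k < n" by (auto simp: Rt_def Rb_def)
    have t: "(\<Sum>m<D. (if j = m then 1 else 0) * R $$ (m, k)) = (if j < D then R $$ (j, k) else 0)"
    proof -
      have "(\<Sum>m<D. (if j = m then 1 else 0) * R $$ (m, k)) = (\<Sum>m<D. if m = j then R $$ (m, k) else 0)"
        by (intro sum.cong) auto
      then show ?thesis by (simp add: sum.delta')
    qed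
    have b: "(\<Sum>m<D. (if j = n - D + m then 1 else 0) * R $$ (n - D + m, k)) = (if n - D \<le> j then R $$ (j, k) else 0)"
    proof -
      have "(\<Sum>m<D. (if j = n - D + m then 1 else 0) * R $$ (n - D + m, k)) =
          (\<Sum>m<D. if m = j - (n - D) \<and> n - D \<le> j then R $$ (j, k) else 0)"
        by (intro sum.cong refl) auto
      also have "\<dots> = (if n - D \<le> j then R $$ (j, k) else 0)"
        using jk by (cases "n - D \<le> j") (auto simp: sum.delta')
      finally show ?thesis .
    qed
    show "R $$ (j, k) = (Rt + Rb) $$ (j, k)"
      using jk t b z[OF jk] Dn by (auto simp: Rt_def Rb_def)
  qed (use R in \<open>auto simp: Rt_def Rb_def\<close>)
  then show ?thesis using low_rank_add[OF Lt Lb] by (simp add: mult_2)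
qed

section \<open>Perturbing the matrix cosine\<close>

definition cos_coeff :: "nat \<Rightarrow> complex" where
  "cos_coeff m = (-1) ^ m / of_nat (fact (2 * m))"

lemma norm_cos_coeff: "cmod (cos_coeff m) = 1 / fact (2 * m)"
  unfolding cos_coeff_def by (simp add: norm_divide norm_power)

lemma norm_cos_coeff_le_1: "cmod (cos_coeff m) \<le> 1"
  unfolding norm_cos_coeff by simp

fun cos_partial :: "nat \<Rightarrow> nat \<Rightarrow> complex mat \<Rightarrow> complex mat" where
  "cos_partial n 0 X = 0\<^sub>m n n"
| "cos_partial n (Suc K) X = cos_partial n K X + cos_coeff K \<cdot>\<^sub>m (X ^\<^sub>m (2 * K))"

lemma cos_partial_carrier: "X \<in> carrier_mat n n \<Longrightarrow> cos_partial n K X \<in> carrier_mat n n"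
  by (induction K) auto

lemma cos_partial_index: assumes "X \<in> carrier_mat n n" "i < n" "j < n"
  shows "cos_partial n K X $$ (i, j) = (\<Sum>m<K. cos_coeff m * (X ^\<^sub>m (2 * m)) $$ (i, j))"
proof (induction K)
  case 0 then show ?case using assms by simp
next
  case (Suc K)
  have "cos_partial n (Suc K) X $$ (i, j) = cos_partial n K X $$ (i, j) + cos_coeff K * (X ^\<^sub>m (2 * K)) $$ (i, j)"
    using assms cos_partial_carrier[OF assms(1), of K] pow_carrier_mat[OF assms(1), of "2 * K"] by simp
  then show ?case using Suc by simp
qed

lemma mat_pow_step_diff:
  fixes P Q Z R :: "complex mat"
  assumes "P \<in> carrier_mat n n" "Q \<in> carrier_mat n n" "Z \<in> carrier_mat n n" "R \<in> carrier_mat n n"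
  shows "P * (Z + R) - Q * Z = (P - Q) * (Z + R) + Q * R"
proof -
  have ZR: "Z + R \<in> carrier_mat n n" using assms by simp
  have e1: "(P - Q) * (Z + R) = P * (Z + R) - Q * (Z + R)" using minus_mult_distrib_mat[OF assms(1,2) ZR] .
  have e2: "Q * (Z + R) = Q * Z + Q * R" using mult_add_distrib_mat[OF assms(2,3,4)] .
  have c: "P * (Z + R) \<in> carrier_mat n n" "Q * Z \<in> carrier_mat n n" "Q * R \<in> carrier_mat n n"
    using assms ZR by auto
  show ?thesis unfolding e1 e2 using c[THEN carrier_matD(1)] c[THEN carrier_matD(2)] assms[THEN carrier_matD(1)] assms[THEN carrier_matD(2)]
    by (intro eq_matI) auto
qed

lemma low_rank_pow_perturb: assumes Z: "Z \<in> carrier_mat n n" and R: "low_rank n r R"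
  shows "low_rank n (j * r) ((Z + R) ^\<^sub>m j - Z ^\<^sub>m j)"
proof (induction j)
  case 0
  have "(Z + R) ^\<^sub>m 0 - Z ^\<^sub>m 0 = 0\<^sub>m n n" using Z low_rank_carrier[OF R] by (intro eq_matI) auto
  then show ?case using low_rank_zero by simp
next
  case (Suc j)
  have Rc: "R \<in> carrier_mat n n" using low_rank_carrier[OF R] .
  have P: "(Z + R) ^\<^sub>m j \<in> carrier_mat n n" using Z Rc by (intro pow_carrier_mat) simp
  have Q: "Z ^\<^sub>m j \<in> carrier_mat n n" using Z by (rule pow_carrier_mat)
  have "(Z + R) ^\<^sub>m Suc j - Z ^\<^sub>m Suc j = ((Z + R) ^\<^sub>m j - Z ^\<^sub>m j) * (Z + R) + Z ^\<^sub>m j * R"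
    using mat_pow_step_diff[OF P Q Z Rc] by simp
  moreover have "low_rank n (j * r) (((Z + R) ^\<^sub>m j - Z ^\<^sub>m j) * (Z + R))"
    using Suc Z Rc by (intro low_rank_mult_right) auto
  moreover have "low_rank n r (Z ^\<^sub>m j * R)" using R Q by (rule low_rank_mult_left)
  ultimately have "low_rank n (j * r + r) ((Z + R) ^\<^sub>m Suc j - Z ^\<^sub>m Suc j)" using low_rank_add by metis
  then show ?case by (simp add: add.commute)
qed

lemma low_rank_cos_partial_perturb: assumes Z: "Z \<in> carrier_mat n n" and R: "low_rank n r R"
  shows "low_rank n (2 * K * K * r) (cos_partial n K (Z + R) - cos_partial n K Z)"
proof (induction K)
  case 0
  have z: "0\<^sub>m n n - 0\<^sub>m n n = (0\<^sub>m n n :: complex mat)" by (intro eq_matI) auto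
  show ?case unfolding cos_partial.simps z by (rule low_rank_zero)
next
  case (Suc K)
  have Rc: "R \<in> carrier_mat n n" using low_rank_carrier[OF R] .
  have ZR: "Z + R \<in> carrier_mat n n" using Z Rc by simp
  have c: "cos_partial n K (Z + R) \<in> carrier_mat n n" "cos_partial n K Z \<in> carrier_mat n n"
     "(Z + R) ^\<^sub>m (2 * K) \<in> carrier_mat n n" "Z ^\<^sub>m (2 * K) \<in> carrier_mat n n"
    using cos_partial_carrier[OF ZR] cos_partial_carrier[OF Z] pow_carrier_mat[OF ZR] pow_carrier_mat[OF Z] by auto
  have eq: "cos_partial n (Suc K) (Z + R) - cos_partial n (Suc K) Z =
     (cos_partial n K (Z + R) - cos_partial n K Z) + cos_coeff K \<cdot>\<^sub>m ((Z + R) ^\<^sub>m (2 * K) - Z ^\<^sub>m (2 * K))"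
    using c[THEN carrier_matD(1)] c[THEN carrier_matD(2)] Z Rc by (intro eq_matI) (auto simp: algebra_simps)
  have "low_rank n (2 * K * K * r + 2 * K * r) (cos_partial n (Suc K) (Z + R) - cos_partial n (Suc K) Z)"
    unfolding eq by (intro low_rank_add Suc low_rank_smult low_rank_pow_perturb[OF Z R])
  then show ?case by (rule low_rank_mono) (simp add: algebra_simps)
qed

lemma op_bound_pow_perturb:
  assumes Y: "op_bound n Y b" and E: "op_bound n E d" and b: "0 \<le> b" and d: "0 \<le> d" "d \<le> 1"
  shows "op_bound n ((Y + E) ^\<^sub>m j - Y ^\<^sub>m j) (real j * (b + 1) ^ j * d)"
proof (induction j)
  case 0
  have Yc: "Y \<in> carrier_mat n n" "E \<in> carrier_mat n n" using op_bound_carrier Y E by auto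
  have "(Y + E) ^\<^sub>m 0 - Y ^\<^sub>m 0 = 0\<^sub>m n n" using Yc by (intro eq_matI) auto
  then show ?case using op_bound_zero by simp
next
  case (Suc j)
  have Yc: "Y \<in> carrier_mat n n" and Ec: "E \<in> carrier_mat n n" using op_bound_carrier Y E by auto
  have P: "(Y + E) ^\<^sub>m j \<in> carrier_mat n n" using Yc Ec by (intro pow_carrier_mat) simp
  have Q: "Y ^\<^sub>m j \<in> carrier_mat n n" using Yc by (rule pow_carrier_mat)
  have eq: "(Y + E) ^\<^sub>m Suc j - Y ^\<^sub>m Suc j = ((Y + E) ^\<^sub>m j - Y ^\<^sub>m j) * (Y + E) + Y ^\<^sub>m j * E"
    using mat_pow_step_diff[OF P Q Yc Ec] by simp
  have YE: "op_bound n (Y + E) (b + 1)" using op_bound_add[OF Y E] by (rule op_bound_mono) (use d in simp)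
  have nn: "0 \<le> real j * (b + 1) ^ j * d" using b d by simp
  have 1: "op_bound n (((Y + E) ^\<^sub>m j - Y ^\<^sub>m j) * (Y + E)) (real j * (b + 1) ^ j * d * (b + 1))"
    by (rule op_bound_mult[OF Suc YE nn])
  have 2: "op_bound n (Y ^\<^sub>m j * E) (b ^ j * d)"
    by (rule op_bound_mult[OF op_bound_pow[OF Y b] E]) (use b in simp)
  have "b ^ j * d \<le> (b + 1) ^ Suc j * d"
  proof -
    have "b ^ j \<le> (b + 1) ^ j" using b by (intro power_mono) auto
    also have "\<dots> \<le> (b + 1) ^ Suc j" using b by simp
    finally show ?thesis using d by (intro mult_right_mono) auto
  qed
  then have "real j * (b + 1) ^ j * d * (b + 1) + b ^ j * d \<le> real (Suc j) * (b + 1) ^ Suc j * d"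
    by (simp add: algebra_simps)
  then show ?case unfolding eq by (rule op_bound_mono[OF op_bound_add[OF 1 2]])
qed

definition cos_partial_lip :: "real \<Rightarrow> nat \<Rightarrow> real" where
  "cos_partial_lip b K = (\<Sum>m<K. real (2 * m) * (b + 1) ^ (2 * m))"

lemma op_bound_cos_partial_perturb:
  assumes Y: "op_bound n Y b" and E: "op_bound n E d" and b: "0 \<le> b" and d: "0 \<le> d" "d \<le> 1"
  shows "op_bound n (cos_partial n K (Y + E) - cos_partial n K Y) (cos_partial_lip b K * d)"
proof (induction K)
  case 0
  have z: "0\<^sub>m n n - 0\<^sub>m n n = (0\<^sub>m n n :: complex mat)" by (intro eq_matI) auto
  have b0: "cos_partial_lip b 0 * d = 0" by (simp add: cos_partial_lip_def)
  show ?case unfolding cos_partial.simps z b0 by (rule op_bound_zero)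
next
  case (Suc K)
  have Yc: "Y \<in> carrier_mat n n" and Ec: "E \<in> carrier_mat n n" using op_bound_carrier Y E by auto
  have YE: "Y + E \<in> carrier_mat n n" using Yc Ec by simp
  have c: "cos_partial n K (Y + E) \<in> carrier_mat n n" "cos_partial n K Y \<in> carrier_mat n n"
     "(Y + E) ^\<^sub>m (2 * K) \<in> carrier_mat n n" "Y ^\<^sub>m (2 * K) \<in> carrier_mat n n"
    using cos_partial_carrier[OF YE] cos_partial_carrier[OF Yc] pow_carrier_mat[OF YE] pow_carrier_mat[OF Yc] by auto
  have eq: "cos_partial n (Suc K) (Y + E) - cos_partial n (Suc K) Y =
     (cos_partial n K (Y + E) - cos_partial n K Y) + cos_coeff K \<cdot>\<^sub>m ((Y + E) ^\<^sub>m (2 * K) - Y ^\<^sub>m (2 * K))"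
    using c[THEN carrier_matD(1)] c[THEN carrier_matD(2)] Yc Ec by (intro eq_matI) (auto simp: algebra_simps)
  have 2: "op_bound n (cos_coeff K \<cdot>\<^sub>m ((Y + E) ^\<^sub>m (2 * K) - Y ^\<^sub>m (2 * K))) (cmod (cos_coeff K) * (real (2 * K) * (b + 1) ^ (2 * K) * d))"
    by (rule op_bound_smult[OF op_bound_pow_perturb[OF Y E b d]])
  have "cmod (cos_coeff K) * (real (2 * K) * (b + 1) ^ (2 * K) * d) \<le> real (2 * K) * (b + 1) ^ (2 * K) * d"
    using norm_cos_coeff_le_1[of K] b d by (intro mult_left_le_one_le) auto
  then have "cos_partial_lip b K * d + cmod (cos_coeff K) * (real (2 * K) * (b + 1) ^ (2 * K) * d) \<le> cos_partial_lip b (Suc K) * d"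
    by (simp add: cos_partial_lip_def algebra_simps)
  then show ?case unfolding eq by (rule op_bound_mono[OF op_bound_add[OF Suc 2]])
qed

definition cos_majorant :: "real \<Rightarrow> nat \<Rightarrow> real" where
  "cos_majorant b m = (b\<^sup>2) ^ m / fact m"

lemma cos_majorant_nonneg: "0 \<le> cos_majorant b m"
  unfolding cos_majorant_def by simp

lemma summable_cos_majorant: "summable (cos_majorant b)"
proof -
  have "cos_majorant b = (\<lambda>m. inverse (fact m) * (b\<^sup>2) ^ m)" by (auto simp: cos_majorant_def divide_inverse mult.commute)
  then show ?thesis using summable_exp[of "b\<^sup>2"] by simp
qed

definition cos_tail :: "real \<Rightarrow> nat \<Rightarrow> real" where
  "cos_tail b K = (\<Sum>m. cos_majorant b m) - (\<Sum>m<K. cos_majorant b m)"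

lemma cos_tail_tendsto: "(\<lambda>K. cos_tail b K) \<longlonglongrightarrow> 0"
proof -
  have "(\<lambda>K. (\<Sum>m. cos_majorant b m) - (\<Sum>m<K. cos_majorant b m)) \<longlonglongrightarrow> (\<Sum>m. cos_majorant b m) - (\<Sum>m. cos_majorant b m)"
    by (intro tendsto_diff tendsto_const summable_LIMSEQ summable_cos_majorant)
  then show ?thesis unfolding cos_tail_def by simp
qed

lemma norm_cos_coeff_pow_le:
  assumes "0 \<le> b"
  shows "cmod (cos_coeff m) * b ^ (2 * m) \<le> cos_majorant b m"
proof -
  have "cmod (cos_coeff m) * b ^ (2 * m) = (b\<^sup>2) ^ m / fact (2 * m)"
    by (simp add: norm_cos_coeff power_mult)
  also have "\<dots> \<le> (b\<^sup>2) ^ m / fact m"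
    by (intro divide_left_mono) (auto simp: fact_mono)
  finally show ?thesis unfolding cos_majorant_def .
qed

lemma op_bound_cos_partial_diff: assumes X: "op_bound n X b" and b: "0 \<le> b"
  shows "op_bound n (cos_partial n (K + d) X - cos_partial n K X) (\<Sum>m\<in>{K..<K+d}. cos_majorant b m)"
proof (induction d)
  case 0
  have Xc: "X \<in> carrier_mat n n" using op_bound_carrier[OF X] .
  have z: "cos_partial n K X - cos_partial n K X = 0\<^sub>m n n" using cos_partial_carrier[OF Xc, of K] by (intro eq_matI) auto
  show ?case by (simp add: z op_bound_zero)
next
  case (Suc d)
  have Xc: "X \<in> carrier_mat n n" using op_bound_carrier[OF X] .
  have c: "cos_partial n (K + d) X \<in> carrier_mat n n" "cos_partial n K X \<in> carrier_mat n n" "X ^\<^sub>m (2 * (K + d)) \<in> carrier_mat n n"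
    using cos_partial_carrier[OF Xc] pow_carrier_mat[OF Xc] by auto
  have eq: "cos_partial n (K + Suc d) X - cos_partial n K X = (cos_partial n (K + d) X - cos_partial n K X) + cos_coeff (K + d) \<cdot>\<^sub>m (X ^\<^sub>m (2 * (K + d)))"
    using c[THEN carrier_matD(1)] c[THEN carrier_matD(2)] by (intro eq_matI) auto
  have 2: "op_bound n (cos_coeff (K + d) \<cdot>\<^sub>m (X ^\<^sub>m (2 * (K + d)))) (cmod (cos_coeff (K + d)) * b ^ (2 * (K + d)))"
    by (rule op_bound_smult[OF op_bound_pow[OF X b]])
  have "(\<Sum>m\<in>{K..<K+d}. cos_majorant b m) + cmod (cos_coeff (K + d)) * b ^ (2 * (K + d)) \<le> (\<Sum>m\<in>{K..<K+Suc d}. cos_majorant b m)"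
    using norm_cos_coeff_pow_le[OF b, of "K + d"] by simp
  then show ?case unfolding eq by (rule op_bound_mono[OF op_bound_add[OF Suc 2]])
qed

lemma cos_majorant_sum_le_tail: "(\<Sum>m\<in>{K..<K+d}. cos_majorant b m) \<le> cos_tail b K"
proof -
  have "(\<Sum>m<K+d. cos_majorant b m) = (\<Sum>m<K. cos_majorant b m) + (\<Sum>m\<in>{K..<K+d}. cos_majorant b m)"
    by (subst ivl_disj_un_one(2)[of K "K + d", symmetric]) (auto intro: sum.union_disjoint)
  moreover have "(\<Sum>m<K+d. cos_majorant b m) \<le> (\<Sum>m. cos_majorant b m)" by (rule sum_le_suminf[OF summable_cos_majorant]) (auto simp: cos_majorant_nonneg)
  ultimately show ?thesis unfolding cos_tail_def by simp
qed

lemma summable_cos_series_index: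
  assumes X: "op_bound n X b" and b: "0 \<le> b" and ij: "i < n" "j < n"
  shows "summable (\<lambda>m. cos_coeff m * (X ^\<^sub>m (2 * m)) $$ (i, j))"
proof (rule summable_comparison_test[OF _ summable_cos_majorant[of b]])
  show "\<exists>N. \<forall>m\<ge>N. norm (cos_coeff m * (X ^\<^sub>m (2 * m)) $$ (i, j)) \<le> cos_majorant b m"
  proof (intro exI allI impI)
    fix m :: nat
    have "cmod ((X ^\<^sub>m (2 * m)) $$ (i, j)) \<le> b ^ (2 * m)" by (rule op_bound_entry[OF op_bound_pow[OF X b] ij])
    then have "norm (cos_coeff m * (X ^\<^sub>m (2 * m)) $$ (i, j)) \<le> cmod (cos_coeff m) * b ^ (2 * m)"
      by (simp add: norm_mult mult_left_mono)
    also have "\<dots> \<le> cos_majorant b m" by (rule norm_cos_coeff_pow_le[OF b])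
    finally show "norm (cos_coeff m * (X ^\<^sub>m (2 * m)) $$ (i, j)) \<le> cos_majorant b m" .
  qed
qed

lemma mat_cos_carrier: "X \<in> carrier_mat n n \<Longrightarrow> mat_cos X \<in> carrier_mat n n"
  unfolding mat_cos_def by auto

lemma mat_cos_index: assumes "X \<in> carrier_mat n n" "i < n" "j < n"
  shows "mat_cos X $$ (i, j) = (\<Sum>m. cos_coeff m * (X ^\<^sub>m (2 * m)) $$ (i, j))"
  unfolding mat_cos_def cos_coeff_def using assms by simp

lemma cos_partial_index_tendsto:
  assumes X: "op_bound n X b" and b: "0 \<le> b" and ij: "i < n" "j < n"
  shows "(\<lambda>L. cos_partial n L X $$ (i, j)) \<longlonglongrightarrow> mat_cos X $$ (i, j)"
proof -
  have Xc: "X \<in> carrier_mat n n" using op_bound_carrier[OF X] .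
  show ?thesis unfolding cos_partial_index[OF Xc ij] mat_cos_index[OF Xc ij]
    by (rule summable_LIMSEQ[OF summable_cos_series_index[OF X b ij]])
qed

lemma op_bound_cos_remainder:
  assumes X: "op_bound n X b" and b: "0 \<le> b"
  shows "op_bound n (mat_cos X - cos_partial n K X) (cos_tail b K)"
proof (rule op_bound_limit)
  have Xc: "X \<in> carrier_mat n n" using op_bound_carrier[OF X] .
  show "mat_cos X - cos_partial n K X \<in> carrier_mat n n"
    using cos_partial_carrier[OF Xc] by (rule minus_carrier_mat)
  show "cos_partial n L X - cos_partial n K X \<in> carrier_mat n n" for L
    using cos_partial_carrier[OF Xc] by (rule minus_carrier_mat)
  show "(\<lambda>L. (cos_partial n L X - cos_partial n K X) $$ (i, j)) \<longlonglongrightarrow> (mat_cos X - cos_partial n K X) $$ (i, j)"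
    if ij: "i < n" "j < n" for i j
  proof -
    have "dim_row (cos_partial n K X) = n" "dim_col (cos_partial n K X) = n"
      using cos_partial_carrier[OF Xc, of K] by auto
    then show ?thesis
      using ij by simp (intro tendsto_diff tendsto_const cos_partial_index_tendsto[OF X b ij])
  qed
  show "eventually (\<lambda>L. op_bound n (cos_partial n L X - cos_partial n K X) (cos_tail b K)) sequentially"
    unfolding eventually_sequentially
  proof (intro exI allI impI)
    fix L assume "K \<le> L"
    then obtain d where "L = K + d" using le_Suc_ex by blast
    then show "op_bound n (cos_partial n L X - cos_partial n K X) (cos_tail b K)"
      using op_bound_mono[OF op_bound_cos_partial_diff[OF X b] cos_majorant_sum_le_tail] by simp
  qed
qed

lemma mat_cos_perturb_decomp:
  assumes cC: "op_bound n Cm S" and A: "A = Cm + R0 + E0" and R0: "low_rank n r R0" and E0: "op_bound n E0 d"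
    and nA: "op_bound n A S" and S: "0 \<le> S" and d: "0 \<le> d" "d \<le> 1"
  shows "\<exists>R1 E1. mat_cos A = mat_cos Cm + R1 + E1 \<and> low_rank n (2 * K * K * r) R1 \<and>
           op_bound n E1 (cos_tail S K + cos_tail S K + cos_partial_lip S K * d)"
proof -
  have Cc: "Cm \<in> carrier_mat n n" using op_bound_carrier[OF cC] .
  have R0c: "R0 \<in> carrier_mat n n" using low_rank_carrier[OF R0] .
  have E0c: "E0 \<in> carrier_mat n n" using op_bound_carrier[OF E0] .
  have CE: "Cm + E0 \<in> carrier_mat n n" using Cc E0c by simp
  have A2: "A = (Cm + E0) + R0" unfolding A using Cc R0c E0c by (intro eq_matI) auto
  define R1 where "R1 = cos_partial n K ((Cm + E0) + R0) - cos_partial n K (Cm + E0)"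
  define E1 where "E1 = (mat_cos A - cos_partial n K A) - (mat_cos Cm - cos_partial n K Cm) + (cos_partial n K (Cm + E0) - cos_partial n K Cm)"
  have R1: "low_rank n (2 * K * K * r) R1" unfolding R1_def by (rule low_rank_cos_partial_perturb[OF CE R0])
  have t1: "op_bound n (mat_cos A - cos_partial n K A) (cos_tail S K)" by (rule op_bound_cos_remainder[OF nA S])
  have t2: "op_bound n (mat_cos Cm - cos_partial n K Cm) (cos_tail S K)" by (rule op_bound_cos_remainder[OF cC S])
  have t3: "op_bound n (cos_partial n K (Cm + E0) - cos_partial n K Cm) (cos_partial_lip S K * d)" by (rule op_bound_cos_partial_perturb[OF cC E0 S d])
  have E1: "op_bound n E1 (cos_tail S K + cos_tail S K + cos_partial_lip S K * d)" unfolding E1_def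
    by (intro op_bound_add op_bound_minus t1 t2 t3)
  have Ac: "A \<in> carrier_mat n n" using op_bound_carrier[OF nA] .
  have c: "mat_cos A \<in> carrier_mat n n" "mat_cos Cm \<in> carrier_mat n n" "cos_partial n K A \<in> carrier_mat n n"
     "cos_partial n K Cm \<in> carrier_mat n n" "cos_partial n K (Cm + E0) \<in> carrier_mat n n"
    using mat_cos_carrier[OF Ac] mat_cos_carrier[OF Cc] cos_partial_carrier[OF Ac] cos_partial_carrier[OF Cc] cos_partial_carrier[OF CE] by auto
  have "mat_cos A = mat_cos Cm + R1 + E1"
    unfolding R1_def E1_def A2[symmetric] using c[THEN carrier_matD(1)] c[THEN carrier_matD(2)]
    by (intro eq_matI) auto
  then show ?thesis using R1 E1 by blast
qed

section \<open>Toeplitz matrices as Fourier multipliers\<close>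

definition fourier_basis :: "int \<Rightarrow> real \<Rightarrow> complex" where
  "fourier_basis m \<theta> = exp (\<i> * of_int m * of_real \<theta>)"

lemma fourier_basis_mult: "fourier_basis a \<theta> * fourier_basis b \<theta> = fourier_basis (a + b) \<theta>"
  unfolding fourier_basis_def by (simp add: exp_add[symmetric] algebra_simps)

lemma cnj_fourier_basis: "cnj (fourier_basis a \<theta>) = fourier_basis (- a) \<theta>"
  unfolding fourier_basis_def by (simp add: exp_cnj)

lemma norm_fourier_basis: "cmod (fourier_basis a \<theta>) = 1"
  unfolding fourier_basis_def by (simp add: norm_exp_i_times[of "of_int a * \<theta>", simplified mult.assoc[symmetric]] mult.assoc)

lemma continuous_on_fourier_basis: "continuous_on S (fourier_basis m)"
  unfolding fourier_basis_def by (intro continuous_intros)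

lemma has_integral_fourier_basis: "(fourier_basis m has_integral (if m = 0 then complex_of_real (2 * pi) else 0)) {-pi..pi}"
proof (cases "m = 0")
  case True
  have d: "\<And>x. x \<in> {-pi..pi} \<Longrightarrow> ((\<lambda>x. complex_of_real x) has_vector_derivative 1) (at x within {-pi..pi})"
    by (rule has_vector_derivative_real_field) (auto intro!: derivative_eq_intros)
  have "((\<lambda>x. 1) has_integral (complex_of_real pi - complex_of_real (-pi))) {-pi..pi}"
    by (rule fundamental_theorem_of_calculus[OF _ d]) auto
  moreover have "fourier_basis m = (\<lambda>x. 1)" using True by (auto simp: fourier_basis_def)
  ultimately show ?thesis using True by simp
next
  case False
  define c where "c = \<i> * of_int m"
  have c0: "c \<noteq> 0" using False by (simp add: c_def)
  define G where "G z = exp (c * z) / c" for z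
  have dG: "(G has_field_derivative exp (c * z)) (at z)" for z
    unfolding G_def using c0 by (auto intro!: derivative_eq_intros simp: field_simps)
  have d: "\<And>x. x \<in> {-pi..pi} \<Longrightarrow> ((\<lambda>x. G (complex_of_real x)) has_vector_derivative fourier_basis m x) (at x within {-pi..pi})"
    using has_vector_derivative_real_field[OF dG] by (simp add: fourier_basis_def c_def)
  have int: "(fourier_basis m has_integral (G (complex_of_real pi) - G (complex_of_real (-pi)))) {-pi..pi}"
    by (rule fundamental_theorem_of_calculus[OF _ d]) auto
  have "exp (c * complex_of_real pi) = cis (of_int m * pi)"
    by (simp add: cis_conv_exp c_def mult.assoc)
  moreover have "exp (c * complex_of_real (-pi)) = cis (- (of_int m * pi))"
    by (simp add: cis_conv_exp c_def mult.assoc)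
  moreover have "cis (of_int m * pi) = cis (- (of_int m * pi))"
  proof -
    have "sin (of_int m * pi) = 0" by (simp add: sin_times_pi_eq_0)
    then show ?thesis by (simp add: complex_eq_iff)
  qed
  ultimately have "G (complex_of_real pi) - G (complex_of_real (-pi)) = 0"
    unfolding G_def by simp
  then show ?thesis using int False by simp
qed

lemma fourier_coeff_trig_sum: assumes K: "finite K"
  shows "fourier_coeff (\<lambda>\<theta>. \<Sum>k\<in>K. b k * fourier_basis k \<theta>) s = (if s \<in> K then b s else 0)"
proof -
  have eq: "(\<Sum>k\<in>K. b k * fourier_basis k \<theta>) * exp (- \<i> * of_int s * of_real \<theta>) = (\<Sum>k\<in>K. b k * fourier_basis (k - s) \<theta>)" for \<theta>
  proof -
    have "exp (- \<i> * of_int s * of_real \<theta>) = fourier_basis (- s) \<theta>" by (simp add: fourier_basis_def)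
    then show ?thesis by (simp add: sum_distrib_right mult.assoc fourier_basis_mult)
  qed
  have "((\<lambda>\<theta>. \<Sum>k\<in>K. b k * fourier_basis (k - s) \<theta>) has_integral
          (\<Sum>k\<in>K. b k * (if k - s = 0 then complex_of_real (2 * pi) else 0))) {-pi..pi}"
    using K by (intro has_integral_sum has_integral_mult_right has_integral_fourier_basis)
  moreover have "(\<Sum>k\<in>K. b k * (if k - s = 0 then complex_of_real (2 * pi) else 0)) =
     (if s \<in> K then b s * complex_of_real (2 * pi) else 0)"
  proof -
    have "(\<Sum>k\<in>K. b k * (if k - s = 0 then complex_of_real (2 * pi) else 0)) =
        (\<Sum>k\<in>K. if k = s then b k * complex_of_real (2 * pi) else 0)"
      by (intro sum.cong) auto
    also have "\<dots> = (if s \<in> K then b s * complex_of_real (2 * pi) else 0)" using K by (simp add: sum.delta')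
    finally show ?thesis .
  qed
  ultimately have "integral {-pi..pi} (\<lambda>\<theta>. (\<Sum>k\<in>K. b k * fourier_basis k \<theta>) * exp (- \<i> * of_int s * of_real \<theta>))
       = (if s \<in> K then b s * complex_of_real (2 * pi) else 0)"
    unfolding eq by (simp add: integral_unique)
  then show ?thesis unfolding fourier_coeff_def by simp
qed

lemma Re_mult_cnj: "Re (z * cnj z) = (cmod z)\<^sup>2"
  by (subst complex_norm_square[symmetric]) simp

lemma has_integral_trig_sum_square:
  "((\<lambda>\<theta>. (\<Sum>j<n. y j * fourier_basis (int j) \<theta>) * cnj (\<Sum>j<n. y j * fourier_basis (int j) \<theta>)) has_integral
     complex_of_real (2 * pi * (\<Sum>j<n. (cmod (y j))\<^sup>2))) {-pi..pi}"
proof -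
  have eq: "(\<Sum>j<n. y j * fourier_basis (int j) \<theta>) * cnj (\<Sum>j<n. y j * fourier_basis (int j) \<theta>) =
      (\<Sum>j<n. \<Sum>l<n. (y j * cnj (y l)) * fourier_basis (int j - int l) \<theta>)" for \<theta>
  proof -
    have "cnj (\<Sum>j<n. y j * fourier_basis (int j) \<theta>) = (\<Sum>l<n. cnj (y l) * fourier_basis (- int l) \<theta>)"
      by (simp add: cnj_sum cnj_fourier_basis)
    then show ?thesis
      by (simp add: sum_product mult_ac fourier_basis_mult)
  qed
  have hi: "((\<lambda>\<theta>. \<Sum>j<n. \<Sum>l<n. (y j * cnj (y l)) * fourier_basis (int j - int l) \<theta>) has_integral
      (\<Sum>j<n. \<Sum>l<n. (y j * cnj (y l)) * (if int j - int l = 0 then complex_of_real (2 * pi) else 0))) {-pi..pi}"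
    by (intro has_integral_sum has_integral_mult_right has_integral_fourier_basis finite_lessThan)
  have "(\<Sum>j<n. \<Sum>l<n. (y j * cnj (y l)) * (if int j - int l = 0 then complex_of_real (2 * pi) else 0))
      = (\<Sum>j<n. y j * cnj (y j) * complex_of_real (2 * pi))"
  proof (intro sum.cong refl)
    fix j assume j: "j \<in> {..<n}"
    have "(\<Sum>l<n. (y j * cnj (y l)) * (if int j - int l = 0 then complex_of_real (2 * pi) else 0))
        = (\<Sum>l<n. if l = j then y j * cnj (y l) * complex_of_real (2 * pi) else 0)"
      by (intro sum.cong) auto
    also have "\<dots> = y j * cnj (y j) * complex_of_real (2 * pi)" using j by (simp add: sum.delta')
    finally show "(\<Sum>l<n. (y j * cnj (y l)) * (if int j - int l = 0 then complex_of_real (2 * pi) else 0))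
        = y j * cnj (y j) * complex_of_real (2 * pi)" .
  qed
  also have "\<dots> = (\<Sum>j<n. complex_of_real (2 * pi * (cmod (y j))\<^sup>2))"
    by (intro sum.cong refl) (simp only: of_real_mult complex_norm_square mult_ac)
  also have "\<dots> = complex_of_real (2 * pi * (\<Sum>j<n. (cmod (y j))\<^sup>2))"
    by (simp only: sum_distrib_left of_real_sum)
  finally show ?thesis using hi unfolding eq[symmetric] by simp
qed

lemma parseval_trig_sum:
  "((\<lambda>\<theta>. (cmod (\<Sum>j<n. y j * fourier_basis (int j) \<theta>))\<^sup>2) has_integral (2 * pi * (\<Sum>j<n. (cmod (y j))\<^sup>2))) {-pi..pi}"
proof -
  have "(Re \<circ> (\<lambda>\<theta>. (\<Sum>j<n. y j * fourier_basis (int j) \<theta>) * cnj (\<Sum>j<n. y j * fourier_basis (int j) \<theta>)) has_integral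
     Re (complex_of_real (2 * pi * (\<Sum>j<n. (cmod (y j))\<^sup>2)))) {-pi..pi}"
    by (rule has_integral_linear[OF has_integral_trig_sum_square bounded_linear_Re])
  moreover have "Re \<circ> (\<lambda>\<theta>. (\<Sum>j<n. y j * fourier_basis (int j) \<theta>) * cnj (\<Sum>j<n. y j * fourier_basis (int j) \<theta>))
      = (\<lambda>\<theta>. (cmod (\<Sum>j<n. y j * fourier_basis (int j) \<theta>))\<^sup>2)"
    by (rule ext) (simp only: o_def Re_mult_cnj)
  ultimately show ?thesis by simp
qed

lemma fourier_coeff_diff_integral: "fourier_coeff g (int j - int k) =
   integral {-pi..pi} (\<lambda>\<theta>. g \<theta> * fourier_basis (int k - int j) \<theta>) / (2 * of_real pi)"
proof -
  have "(\<lambda>\<theta>. g \<theta> * exp (- \<i> * of_int (int j - int k) * of_real \<theta>)) = (\<lambda>\<theta>. g \<theta> * fourier_basis (int k - int j) \<theta>)"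
    by (rule ext) (simp add: fourier_basis_def algebra_simps)
  then show ?thesis unfolding fourier_coeff_def by simp
qed

lemma toeplitz_form_integral: assumes g: "continuous_on {-pi..pi} g"
  shows "(\<Sum>j<n. \<Sum>k<n. cnj (y j) * fourier_coeff g (int j - int k) * x k) =
    integral {-pi..pi} (\<lambda>\<theta>. g \<theta> * cnj (\<Sum>j<n. y j * fourier_basis (int j) \<theta>) * (\<Sum>k<n. x k * fourier_basis (int k) \<theta>)) / (2 * of_real pi)"
proof -
  define I where "I j k = integral {-pi..pi} (\<lambda>\<theta>. g \<theta> * fourier_basis (int k - int j) \<theta>)" for j k
  have hi: "((\<lambda>\<theta>. g \<theta> * fourier_basis (int k - int j) \<theta>) has_integral I j k) {-pi..pi}" for j k
    unfolding I_def by (intro integrable_integral integrable_continuous_interval continuous_on_mult g continuous_on_fourier_basis)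
  have pw: "g \<theta> * cnj (\<Sum>j<n. y j * fourier_basis (int j) \<theta>) * (\<Sum>k<n. x k * fourier_basis (int k) \<theta>) =
      (\<Sum>j<n. \<Sum>k<n. (cnj (y j) * x k) * (g \<theta> * fourier_basis (int k - int j) \<theta>))" for \<theta>
    by (simp add: cnj_sum cnj_fourier_basis sum_product sum_distrib_left mult_ac fourier_basis_mult)
  have "((\<lambda>\<theta>. \<Sum>j<n. \<Sum>k<n. (cnj (y j) * x k) * (g \<theta> * fourier_basis (int k - int j) \<theta>)) has_integral
      (\<Sum>j<n. \<Sum>k<n. (cnj (y j) * x k) * I j k)) {-pi..pi}"
    by (intro has_integral_sum has_integral_mult_right hi finite_lessThan)
  then have "integral {-pi..pi} (\<lambda>\<theta>. g \<theta> * cnj (\<Sum>j<n. y j * fourier_basis (int j) \<theta>) * (\<Sum>k<n. x k * fourier_basis (int k) \<theta>))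
     = (\<Sum>j<n. \<Sum>k<n. (cnj (y j) * x k) * I j k)"
    unfolding pw by (rule integral_unique)
  moreover have "(\<Sum>j<n. \<Sum>k<n. cnj (y j) * fourier_coeff g (int j - int k) * x k) =
      (\<Sum>j<n. \<Sum>k<n. (cnj (y j) * x k) * I j k) / (2 * of_real pi)"
    unfolding fourier_coeff_diff_integral I_def[symmetric] by (simp add: sum_divide_distrib mult_ac)
  ultimately show ?thesis by simp
qed

lemma mult_le_weighted_mean:
  assumes t: "0 < t"
  shows "(a::real) * b \<le> (t * a\<^sup>2 + b\<^sup>2 / t) / 2"
proof -
  have "0 \<le> (t * a - b)\<^sup>2" by simp
  then have "2 * t * (a * b) \<le> t\<^sup>2 * a\<^sup>2 + b\<^sup>2" by (simp add: power2_eq_square algebra_simps)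
  then have "a * b \<le> (t\<^sup>2 * a\<^sup>2 + b\<^sup>2) / (2 * t)" using t by (simp add: field_simps)
  also have "\<dots> = (t * a\<^sup>2 + b\<^sup>2 / t) / 2" using t by (simp add: field_simps power2_eq_square)
  finally show ?thesis .
qed

lemma toeplitz_form_bound_weighted:
  assumes g: "continuous_on {-pi..pi} g" and S: "\<forall>\<theta>\<in>{-pi..pi}. cmod (g \<theta>) \<le> S"
  and t: "0 < t"
  shows "cmod (\<Sum>j<n. \<Sum>k<n. cnj (y j) * fourier_coeff g (int j - int k) * x k) \<le>
    S * (t * (\<Sum>j<n. (cmod (y j))\<^sup>2) + (\<Sum>k<n. (cmod (x k))\<^sup>2) / t) / 2"
proof -
  define Y where "Y \<theta> = (\<Sum>j<n. y j * fourier_basis (int j) \<theta>)" for \<theta>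
  define X where "X \<theta> = (\<Sum>k<n. x k * fourier_basis (int k) \<theta>)" for \<theta>
  define A2 where "A2 = (\<Sum>j<n. (cmod (y j))\<^sup>2)"
  define B2 where "B2 = (\<Sum>k<n. (cmod (x k))\<^sup>2)"
  have S0: "0 \<le> S" using S[rule_format, of 0] by (meson norm_ge_zero order_trans atLeastAtMost_iff pi_ge_zero neg_le_0_iff_le)
  have hY: "((\<lambda>\<theta>. (cmod (Y \<theta>))\<^sup>2) has_integral (2 * pi * A2)) {-pi..pi}"
    unfolding Y_def A2_def by (rule parseval_trig_sum)
  have hX: "((\<lambda>\<theta>. (cmod (X \<theta>))\<^sup>2) has_integral (2 * pi * B2)) {-pi..pi}"
    unfolding X_def B2_def by (rule parseval_trig_sum)
  have hB: "((\<lambda>\<theta>. S * (t * (cmod (Y \<theta>))\<^sup>2 + (cmod (X \<theta>))\<^sup>2 / t) / 2) has_integral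
      (S * (t * (2 * pi * A2) + (2 * pi * B2) / t) / 2)) {-pi..pi}"
  proof -
    have "((\<lambda>\<theta>. t * (cmod (Y \<theta>))\<^sup>2 + (cmod (X \<theta>))\<^sup>2 / t) has_integral (t * (2 * pi * A2) + (2 * pi * B2) / t)) {-pi..pi}"
      by (intro has_integral_add has_integral_mult_right has_integral_divide hY hX)
    from has_integral_mult_right[OF this, of "S / 2"] show ?thesis by (simp add: mult_ac)
  qed
  have contYX: "continuous_on {-pi..pi} (\<lambda>\<theta>. g \<theta> * cnj (Y \<theta>) * X \<theta>)"
    unfolding Y_def X_def by (intro continuous_intros g continuous_on_fourier_basis continuous_on_cnj)
  have pw: "cmod (g \<theta> * cnj (Y \<theta>) * X \<theta>) \<le> S * (t * (cmod (Y \<theta>))\<^sup>2 + (cmod (X \<theta>))\<^sup>2 / t) / 2"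
    if \<theta>: "\<theta> \<in> {-pi..pi}" for \<theta>
  proof -
    have "cmod (g \<theta> * cnj (Y \<theta>) * X \<theta>) = cmod (g \<theta>) * (cmod (Y \<theta>) * cmod (X \<theta>))" by (simp add: norm_mult)
    also have "\<dots> \<le> S * (cmod (Y \<theta>) * cmod (X \<theta>))" using S \<theta> by (intro mult_right_mono) auto
    also have "cmod (Y \<theta>) * cmod (X \<theta>) \<le> (t * (cmod (Y \<theta>))\<^sup>2 + (cmod (X \<theta>))\<^sup>2 / t) / 2"
      using mult_le_weighted_mean[OF t] .
    then have "S * (cmod (Y \<theta>) * cmod (X \<theta>)) \<le> S * ((t * (cmod (Y \<theta>))\<^sup>2 + (cmod (X \<theta>))\<^sup>2 / t) / 2)"
      using S0 by (rule mult_left_mono)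
    finally show ?thesis by simp
  qed
  have "cmod (integral {-pi..pi} (\<lambda>\<theta>. g \<theta> * cnj (Y \<theta>) * X \<theta>)) \<le>
      integral {-pi..pi} (\<lambda>\<theta>. S * (t * (cmod (Y \<theta>))\<^sup>2 + (cmod (X \<theta>))\<^sup>2 / t) / 2)"
    by (rule integral_norm_bound_integral[OF integrable_continuous_interval[OF contYX] has_integral_integrable[OF hB] pw])
  also have "\<dots> = S * (t * (2 * pi * A2) + (2 * pi * B2) / t) / 2" using hB by (rule integral_unique)
  finally have main: "cmod (integral {-pi..pi} (\<lambda>\<theta>. g \<theta> * cnj (Y \<theta>) * X \<theta>)) \<le> S * (t * (2 * pi * A2) + (2 * pi * B2) / t) / 2" .
  have "cmod (\<Sum>j<n. \<Sum>k<n. cnj (y j) * fourier_coeff g (int j - int k) * x k) =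
      cmod (integral {-pi..pi} (\<lambda>\<theta>. g \<theta> * cnj (Y \<theta>) * X \<theta>)) / (2 * pi)"
    unfolding toeplitz_form_integral[OF g] Y_def X_def by (simp add: norm_divide)
  also have "\<dots> \<le> (S * (t * (2 * pi * A2) + (2 * pi * B2) / t) / 2) / (2 * pi)"
    using main by (intro divide_right_mono) auto
  also have "\<dots> = S * (t * A2 + B2 / t) / 2" by (simp add: field_simps)
  finally show ?thesis unfolding A2_def B2_def .
qed

lemma sum_square_eq_0_imp:
  fixes n j :: nat
  shows "(\<Sum>j<n. (cmod (y j))\<^sup>2) = 0 \<Longrightarrow> j < n \<Longrightarrow> y j = 0"
  by (subst (asm) sum_nonneg_eq_0_iff) auto

lemma toeplitz_form_bound:
  assumes g: "continuous_on {-pi..pi} g" and S: "\<forall>\<theta>\<in>{-pi..pi}. cmod (g \<theta>) \<le> S"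
  shows "cmod (\<Sum>j<n. \<Sum>k<n. cnj (y j) * fourier_coeff g (int j - int k) * x k) \<le>
    S * sqrt (\<Sum>j<n. (cmod (y j))\<^sup>2) * sqrt (\<Sum>k<n. (cmod (x k))\<^sup>2)"
proof -
  define A2 where "A2 = (\<Sum>j<n. (cmod (y j))\<^sup>2)"
  define B2 where "B2 = (\<Sum>k<n. (cmod (x k))\<^sup>2)"
  have S0: "0 \<le> S" using S[rule_format, of 0] by (meson norm_ge_zero order_trans atLeastAtMost_iff pi_ge_zero neg_le_0_iff_le)
  have A0: "0 \<le> A2" "0 \<le> B2" unfolding A2_def B2_def by (auto intro: sum_nonneg)
  show ?thesis
  proof (cases "A2 = 0 \<or> B2 = 0")
    case True
    have "(\<Sum>j<n. \<Sum>k<n. cnj (y j) * fourier_coeff g (int j - int k) * x k) = 0"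
    proof (cases "A2 = 0")
      case True
      then have "\<forall>j<n. y j = 0" using sum_square_eq_0_imp[where y=y and n=n] unfolding A2_def by blast
      then show ?thesis by simp
    next
      case False
      then have "B2 = 0" using True by blast
      then have "\<forall>j<n. x j = 0" using sum_square_eq_0_imp[where y=x and n=n] unfolding B2_def by blast
      then show ?thesis by simp
    qed
    then show ?thesis using S0 A0 unfolding A2_def B2_def by simp
  next
    case False
    then have pos: "0 < A2" "0 < B2" using A0 by auto
    define t where "t = sqrt B2 / sqrt A2"
    have t: "0 < t" unfolding t_def using pos by simp
    have "cmod (\<Sum>j<n. \<Sum>k<n. cnj (y j) * fourier_coeff g (int j - int k) * x k) \<le> S * (t * A2 + B2 / t) / 2"
      unfolding A2_def B2_def by (rule toeplitz_form_bound_weighted[OF g S t])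
    also have "t * A2 + B2 / t = 2 * (sqrt A2 * sqrt B2)"
    proof -
      have "t * A2 = sqrt A2 * sqrt B2" unfolding t_def using pos
        by (simp add: field_simps)
      moreover have "B2 / t = sqrt A2 * sqrt B2" unfolding t_def using pos
        by (simp add: field_simps)
      ultimately show ?thesis by simp
    qed
    finally show ?thesis unfolding A2_def B2_def by (simp add: mult_ac)
  qed
qed

lemma op_bound_from_bilinear: assumes A: "A \<in> carrier_mat n n" and S: "0 \<le> S"
  and B: "\<And>y x. cmod (\<Sum>j<n. \<Sum>k<n. cnj (y j) * A $$ (j, k) * x k) \<le>
                 S * sqrt (\<Sum>j<n. (cmod (y j))\<^sup>2) * sqrt (\<Sum>k<n. (cmod (x k))\<^sup>2)"
  shows "op_bound n A S"
proof (rule op_boundI[OF A])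
  fix v :: "complex vec" assume v: "v \<in> carrier_vec n"
  define w where "w = A *\<^sub>v v"
  have w: "w \<in> carrier_vec n" unfolding w_def using A v by simp
  have "complex_of_real ((vec_norm2 w)\<^sup>2) = (\<Sum>j<n. cnj (w $ j) * w $ j)" using vec_norm2_square[of w] w by simp
  also have "\<dots> = (\<Sum>j<n. \<Sum>k<n. cnj (w $ j) * A $$ (j, k) * v $ k)"
    unfolding w_def using mult_mat_vec_index_sum[OF A v] by (simp add: sum_distrib_left mult.assoc)
  finally have eq: "complex_of_real ((vec_norm2 w)\<^sup>2) = (\<Sum>j<n. \<Sum>k<n. cnj (w $ j) * A $$ (j, k) * v $ k)" .
  have nw: "vec_norm2 w = sqrt (\<Sum>j<n. (cmod (w $ j))\<^sup>2)" "vec_norm2 v = sqrt (\<Sum>j<n. (cmod (v $ j))\<^sup>2)"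
    unfolding vec_norm2_def using w v by auto
  have "(vec_norm2 w)\<^sup>2 = cmod (complex_of_real ((vec_norm2 w)\<^sup>2))" by (simp only: norm_of_real abs_of_nonneg zero_le_power2)
  also have "\<dots> \<le> S * sqrt (\<Sum>j<n. (cmod (w $ j))\<^sup>2) * sqrt (\<Sum>j<n. (cmod (v $ j))\<^sup>2)"
    unfolding eq by (rule B)
  also have "\<dots> = S * vec_norm2 w * vec_norm2 v" using nw by simp
  finally have ww: "vec_norm2 w * vec_norm2 w \<le> (S * vec_norm2 v) * vec_norm2 w" by (simp add: power2_eq_square mult_ac)
  have "vec_norm2 w \<le> S * vec_norm2 v"
  proof (cases "vec_norm2 w = 0")
    case True then show ?thesis using S vec_norm2_nonneg[of v] by simp
  next
    case False
    then have "0 < vec_norm2 w" using vec_norm2_nonneg[of w] by linarith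
    then show ?thesis using ww by (rule mult_right_le_imp_le[rotated])
  qed
  then show "vec_norm2 (A *\<^sub>v v) \<le> S * vec_norm2 v" unfolding w_def .
qed

lemma toeplitz_carrier: "toeplitz g n \<in> carrier_mat n n"
  unfolding toeplitz_def by simp

lemma toeplitz_index: "j < n \<Longrightarrow> k < n \<Longrightarrow> toeplitz g n $$ (j, k) = fourier_coeff g (int j - int k)"
  unfolding toeplitz_def by simp

lemma sup_bound_nonneg: "\<forall>\<theta>\<in>{-pi..pi}. cmod (g \<theta>) \<le> S \<Longrightarrow> 0 \<le> S"
  by (metis norm_ge_zero order_trans atLeastAtMost_iff pi_ge_zero neg_le_0_iff_le)

lemma op_bound_toeplitz:
  assumes g: "continuous_on {-pi..pi} g" and S: "\<forall>\<theta>\<in>{-pi..pi}. cmod (g \<theta>) \<le> S"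
  shows "op_bound n (toeplitz g n) S"
proof (rule op_bound_from_bilinear[OF toeplitz_carrier sup_bound_nonneg[OF S]])
  fix y x :: "nat \<Rightarrow> complex"
  have "(\<Sum>j<n. \<Sum>k<n. cnj (y j) * toeplitz g n $$ (j, k) * x k) =
     (\<Sum>j<n. \<Sum>k<n. cnj (y j) * fourier_coeff g (int j - int k) * x k)"
    by (intro sum.cong refl) (simp add: toeplitz_index)
  then show "cmod (\<Sum>j<n. \<Sum>k<n. cnj (y j) * toeplitz g n $$ (j, k) * x k) \<le>
     S * sqrt (\<Sum>j<n. (cmod (y j))\<^sup>2) * sqrt (\<Sum>k<n. (cmod (x k))\<^sup>2)"
    using toeplitz_form_bound[OF g S] by simp
qed

section \<open>The optimal circulant preconditioner\<close>

definition cshift :: "nat \<Rightarrow> nat \<Rightarrow> nat \<Rightarrow> nat" where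
  "cshift n s j = (j + s) mod n"

lemma cshift_inverse: assumes "a < n" shows "cshift n (n - s mod n) (cshift n s a) = a"
proof -
  have n: "0 < n" using assms by simp
  have "s mod n < n" using n by simp
  define q where "q = s div n"
  define r where "r = s mod n"
  have s: "s = n * q + r" unfolding q_def r_def by simp
  have r: "r < n" unfolding r_def using n by simp
  have "a + s + (n - r) = a + n * (q + 1)" using s r by simp
  then have eq: "a + s + (n - s mod n) = a + n * (s div n + 1)" unfolding q_def r_def .
  have "cshift n (n - s mod n) (cshift n s a) = (a + s + (n - s mod n)) mod n"
    unfolding cshift_def by (simp add: mod_add_left_eq)
  also have "\<dots> = a" unfolding eq mod_mult_self2 using assms by simp
  finally show ?thesis .
qed

lemma cshift_less: "0 < n \<Longrightarrow> cshift n s j < n"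
  unfolding cshift_def by simp

lemma bij_betw_cshift: assumes "0 < n" shows "bij_betw (cshift n s) {..<n} {..<n}"
proof -
  have inj: "inj_on (cshift n s) {..<n}"
    by (rule inj_on_inverseI[where g = "cshift n (n - s mod n)"]) (simp add: cshift_inverse)
  have "cshift n s ` {..<n} \<subseteq> {..<n}" using cshift_less[OF assms] by auto
  then have "cshift n s ` {..<n} = {..<n}" using inj by (intro endo_inj_surj) auto
  then show ?thesis using inj unfolding bij_betw_def by simp
qed

lemma sum_cshift: assumes "0 < n" shows "(\<Sum>j<n. f (cshift n s j)) = (\<Sum>j<n. f j)"
  using sum.reindex_bij_betw[OF bij_betw_cshift[OF assms]] .

lemma cshift_diff: assumes n: "0 < n"
  shows "cshift n s j = (cshift n s k + nat ((int j - int k) mod int n)) mod n"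
proof -
  have d: "int (nat ((int j - int k) mod int n)) = (int j - int k) mod int n" using n by simp
  have "int ((cshift n s k + nat ((int j - int k) mod int n)) mod n) =
      ((int k + int s) mod int n + (int j - int k) mod int n) mod int n"
    unfolding cshift_def by (simp only: zmod_int of_nat_add d)
  also have "\<dots> = (int j + int s) mod int n" by (simp add: mod_add_eq add.commute)
  also have "\<dots> = int (cshift n s j)" unfolding cshift_def by (simp only: zmod_int of_nat_add)
  finally show ?thesis by linarith
qed

lemma opt_circ_coeff_average: assumes n: "0 < n" and j: "j < n" and k: "k < n"
  shows "of_nat n * opt_circ_coeff g n (nat ((int j - int k) mod int n)) =
     (\<Sum>s<n. fourier_coeff g (int (cshift n s j) - int (cshift n s k)))"
proof -
  define d where "d = nat ((int j - int k) mod int n)"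
  have dn: "d < n" unfolding d_def using n by (simp add: nat_less_iff)
  define h where "h t = fourier_coeff g (int ((t + d) mod n) - int t)" for t
  have "(\<Sum>s<n. fourier_coeff g (int (cshift n s j) - int (cshift n s k))) = (\<Sum>s<n. h (cshift n s k))"
    unfolding h_def d_def using cshift_diff[OF n] by simp
  also have "\<dots> = (\<Sum>s<n. h (cshift n k s))" by (simp add: cshift_def add.commute)
  also have "\<dots> = (\<Sum>t<n. h t)" by (rule sum_cshift[OF n])
  also have "\<dots> = (\<Sum>t<(n - d) + d. h t)" using dn by simp
  also have "\<dots> = (\<Sum>t<n - d. h t) + (\<Sum>t<d. h (t + (n - d)))" by (rule sum_lessThan_add_split)
  also have "(\<Sum>t<n - d. h t) = (\<Sum>t<n - d. fourier_coeff g (int d))"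
  proof (intro sum.cong refl)
    fix t assume "t \<in> {..<n - d}"
    then have "t + d < n" by simp
    then show "h t = fourier_coeff g (int d)" unfolding h_def by simp
  qed
  also have "(\<Sum>t<d. h (t + (n - d))) = (\<Sum>t<d. fourier_coeff g (int d - int n))"
  proof (intro sum.cong refl)
    fix t assume t: "t \<in> {..<d}"
    have "(t + (n - d) + d) mod n = t" using t dn by (simp add: le_mod_geq)
    then show "h (t + (n - d)) = fourier_coeff g (int d - int n)" unfolding h_def using t dn by simp
  qed
  finally have "(\<Sum>s<n. fourier_coeff g (int (cshift n s j) - int (cshift n s k))) =
     of_nat (n - d) * fourier_coeff g (int d) + of_nat d * fourier_coeff g (int d - int n)" by simp
  then show ?thesis unfolding opt_circ_coeff_def d_def[symmetric] using n by simp
qed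

lemma opt_circ_carrier: "opt_circ g n \<in> carrier_mat n n"
  unfolding opt_circ_def by simp

lemma opt_circ_index: "j < n \<Longrightarrow> k < n \<Longrightarrow> opt_circ g n $$ (j, k) = opt_circ_coeff g n (nat ((int j - int k) mod int n))"
  unfolding opt_circ_def by simp

lemma toeplitz_form_cshift: assumes n: "0 < n"
  shows "(\<Sum>j<n. \<Sum>k<n. cnj (y j) * fourier_coeff g (int (cshift n s j) - int (cshift n s k)) * x k) =
    (\<Sum>j<n. \<Sum>k<n. cnj (y (cshift n (n - s mod n) j)) * fourier_coeff g (int j - int k) * x (cshift n (n - s mod n) k))"
proof -
  let ?y = "\<lambda>j. y (cshift n (n - s mod n) j)" and ?x = "\<lambda>k. x (cshift n (n - s mod n) k)"
  have "(\<Sum>j<n. \<Sum>k<n. cnj (y j) * fourier_coeff g (int (cshift n s j) - int (cshift n s k)) * x k) =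
      (\<Sum>j<n. \<Sum>k<n. cnj (?y (cshift n s j)) * fourier_coeff g (int (cshift n s j) - int (cshift n s k)) * ?x (cshift n s k))"
    by (intro sum.cong refl) (simp add: cshift_inverse)
  also have "\<dots> = (\<Sum>j<n. \<Sum>k<n. cnj (?y (cshift n s j)) * fourier_coeff g (int (cshift n s j) - int k) * ?x k)"
    by (intro sum.cong refl sum_cshift[OF n])
  also have "\<dots> = (\<Sum>j<n. \<Sum>k<n. cnj (?y j) * fourier_coeff g (int j - int k) * ?x k)"
    by (rule sum_cshift[OF n, where f = "\<lambda>j. \<Sum>k<n. cnj (?y j) * fourier_coeff g (int j - int k) * ?x k"])
  finally show ?thesis .
qed

lemma sum_square_cshift: assumes n: "0 < n"
  shows "(\<Sum>j<n. (cmod (y (cshift n (n - s mod n) j)))\<^sup>2) = (\<Sum>j<n. (cmod (y j))\<^sup>2)"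
proof -
  have "(\<Sum>j<n. (cmod (y j))\<^sup>2) = (\<Sum>j<n. (cmod (y (cshift n (n - s mod n) (cshift n s j))))\<^sup>2)"
    by (intro sum.cong refl) (simp add: cshift_inverse)
  also have "\<dots> = (\<Sum>j<n. (cmod (y (cshift n (n - s mod n) j)))\<^sup>2)"
    by (rule sum_cshift[OF n, where f = "\<lambda>j. (cmod (y (cshift n (n - s mod n) j)))\<^sup>2"])
  finally show ?thesis by simp
qed

text \<open>\<open>c\<^sub>n[g]\<close> is the average of \<open>A\<^sub>n[g]\<close> conjugated by the \<open>n\<close> cyclic shifts.\<close>

lemma opt_circ_form_average:
  assumes n: "0 < n"
  shows "(\<Sum>j<n. \<Sum>k<n. cnj (y j) * opt_circ g n $$ (j, k) * x k) =
    (\<Sum>s<n. \<Sum>j<n. \<Sum>k<n. cnj (y j) * fourier_coeff g (int (cshift n s j) - int (cshift n s k)) * x k) / of_nat n"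
proof -
  have entry: "opt_circ g n $$ (j, k) = (\<Sum>s<n. fourier_coeff g (int (cshift n s j) - int (cshift n s k))) / of_nat n"
    if "j < n" "k < n" for j k
    using opt_circ_coeff_average[OF n that, of g] opt_circ_index[OF that, of g] n by (simp add: field_simps)
  have "(\<Sum>j<n. \<Sum>k<n. cnj (y j) * opt_circ g n $$ (j, k) * x k) =
      (\<Sum>j<n. \<Sum>k<n. \<Sum>s<n. cnj (y j) * fourier_coeff g (int (cshift n s j) - int (cshift n s k)) * x k / of_nat n)"
    by (intro sum.cong refl) (simp add: entry sum_distrib_left sum_distrib_right sum_divide_distrib)
  also have "\<dots> = (\<Sum>j<n. \<Sum>s<n. \<Sum>k<n. cnj (y j) * fourier_coeff g (int (cshift n s j) - int (cshift n s k)) * x k / of_nat n)"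
    by (intro sum.cong refl sum.swap)
  also have "\<dots> = (\<Sum>s<n. \<Sum>j<n. \<Sum>k<n. cnj (y j) * fourier_coeff g (int (cshift n s j) - int (cshift n s k)) * x k / of_nat n)"
    by (rule sum.swap)
  finally show ?thesis by (simp add: sum_divide_distrib)
qed

lemma op_bound_opt_circ:
  assumes g: "continuous_on {-pi..pi} g" and S: "\<forall>\<theta>\<in>{-pi..pi}. cmod (g \<theta>) \<le> S"
  shows "op_bound n (opt_circ g n) S"
proof (rule op_bound_from_bilinear[OF opt_circ_carrier sup_bound_nonneg[OF S]])
  fix y x :: "nat \<Rightarrow> complex"
  define Ny where "Ny = sqrt (\<Sum>j<n. (cmod (y j))\<^sup>2)"
  define Nx where "Nx = sqrt (\<Sum>k<n. (cmod (x k))\<^sup>2)"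
  define B where "B s = (\<Sum>j<n. \<Sum>k<n. cnj (y j) * fourier_coeff g (int (cshift n s j) - int (cshift n s k)) * x k)" for s
  show "cmod (\<Sum>j<n. \<Sum>k<n. cnj (y j) * opt_circ g n $$ (j, k) * x k) \<le> S * Ny * Nx"
  proof (cases "n = 0")
    case True then show ?thesis using sup_bound_nonneg[OF S] by (simp add: Ny_def Nx_def)
  next
    case False
    then have n: "0 < n" by simp
    have "cmod (B s) \<le> S * Ny * Nx" for s
    proof -
      have "cmod (B s) = cmod (\<Sum>j<n. \<Sum>k<n. cnj (y (cshift n (n - s mod n) j)) *
          fourier_coeff g (int j - int k) * x (cshift n (n - s mod n) k))"
        unfolding B_def toeplitz_form_cshift[OF n] ..
      also have "\<dots> \<le> S * sqrt (\<Sum>j<n. (cmod (y (cshift n (n - s mod n) j)))\<^sup>2) *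
          sqrt (\<Sum>k<n. (cmod (x (cshift n (n - s mod n) k)))\<^sup>2)"
        by (rule toeplitz_form_bound[OF g S])
      also have "\<dots> = S * Ny * Nx" unfolding Ny_def Nx_def sum_square_cshift[OF n] ..
      finally show ?thesis .
    qed
    then have "cmod (\<Sum>s<n. B s) \<le> of_nat n * (S * Ny * Nx)"
      using norm_sum[of B "{..<n}"] sum_mono[of "{..<n}" "\<lambda>s. cmod (B s)" "\<lambda>s. S * Ny * Nx"] by simp
    then show ?thesis
      unfolding opt_circ_form_average[OF n] B_def[symmetric] using n by (simp add: norm_divide field_simps)
  qed
qed

section \<open>Approximation by trigonometric polynomials\<close>

lemma periodic_nat:
  assumes p: "\<forall>x. f (x + 2 * pi) = f x"
  shows "f (x + 2 * pi * real m) = f x"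
proof (induction m arbitrary: x)
  case 0 then show ?case by simp
next
  case (Suc m)
  have "f (x + 2 * pi * real (Suc m)) = f ((x + 2 * pi * real m) + 2 * pi)" by (simp add: algebra_simps)
  also have "\<dots> = f (x + 2 * pi * real m)" using p by simp
  finally show ?case using Suc by simp
qed

lemma periodic_int:
  assumes p: "\<forall>x. f (x + 2 * pi) = f x"
  shows "f (x + 2 * pi * of_int m) = f x"
proof (cases "0 \<le> m")
  case True
  then obtain k where "m = int k" using nonneg_int_cases by blast
  then show ?thesis using periodic_nat[OF p] by simp
next
  case False
  then obtain k where k: "m = - int k" by (metis neg_int_cases le_cases not_le int_cases4)
  have "f ((x + 2 * pi * of_int m) + 2 * pi * real k) = f (x + 2 * pi * of_int m)" using periodic_nat[OF p] .
  then show ?thesis using k by simp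
qed

lemma periodic_cis_eq:
  assumes p: "\<forall>x. f (x + 2 * pi) = f x" and c: "cis a = cis b"
  shows "f a = f b"
proof -
  have "exp (\<i> * complex_of_real a) = exp (\<i> * complex_of_real b)" using c by (simp add: cis_conv_exp)
  then obtain m where m: "\<i> * complex_of_real a = \<i> * complex_of_real b + complex_of_real (real_of_int (2 * m) * pi) * \<i>"
    unfolding exp_eq by blast
  then have "\<i> * complex_of_real a = \<i> * complex_of_real (b + 2 * pi * of_int m)"
    by (simp add: algebra_simps)
  then have "complex_of_real a = complex_of_real (b + 2 * pi * of_int m)"
    by simp
  then have "a = b + 2 * pi * of_int m" using of_real_eq_iff by blast
  then show ?thesis using periodic_int[OF p] by simp
qed

lemma cis_Arg_Arg2pi: assumes z: "z \<noteq> 0" shows "cis (Arg z) = cis (Arg2pi z)"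
proof -
  have "complex_of_real (cmod z) * exp (\<i> * complex_of_real (Arg z)) =
        complex_of_real (cmod z) * exp (\<i> * complex_of_real (Arg2pi z))"
    using Arg_eq[OF z] Arg2pi_eq[of z] by simp
  then have "exp (\<i> * complex_of_real (Arg z)) = exp (\<i> * complex_of_real (Arg2pi z))"
    using z by simp
  then show ?thesis by (simp add: cis_conv_exp)
qed

lemma periodic_Arg_Arg2pi: assumes p: "\<forall>x. f (x + 2 * pi) = f x" shows "f (Arg z) = f (Arg2pi z)"
proof (cases "z = 0")
  case True then show ?thesis by (simp add: Arg_zero)
next
  case False
  then have "cis (Arg z) = cis (Arg2pi z)" by (rule cis_Arg_Arg2pi)
  then show ?thesis by (rule periodic_cis_eq[OF p])
qed

lemma periodic_Arg_cis: assumes p: "\<forall>x. f (x + 2 * pi) = f x" shows "f (Arg (cis t)) = f t"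
proof -
  have "cis (Arg (cis t)) = cis t" using cis_Arg[of "cis t"] by (simp add: sgn_cis)
  then show ?thesis by (rule periodic_cis_eq[OF p])
qed

lemma continuous_on_sphere_Arg:
  assumes c: "continuous_on UNIV f" and p: "\<forall>x. f (x + 2 * pi) = f x"
  shows "continuous_on (sphere 0 1) (\<lambda>z. f (Arg z))"
proof (rule continuous_at_imp_continuous_on, intro ballI)
  fix z :: complex assume "z \<in> sphere 0 1"
  then have z: "z \<noteq> 0" by auto
  have cf: "isCont f x" for x using c by (simp add: continuous_on_eq_continuous_at)
  show "isCont (\<lambda>z. f (Arg z)) z"
  proof (cases "z \<in> \<real>\<^sub>\<le>\<^sub>0")
    case False
    then show ?thesis using continuous_at_Arg[OF False] cf by (intro continuous_at_compose[unfolded o_def, of z Arg f]) auto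
  next
    case True
    then have "z \<notin> \<real>\<^sub>\<ge>\<^sub>0" using z by (auto simp: nonpos_Reals_def nonneg_Reals_def)
    then have "isCont (\<lambda>z. f (Arg2pi z)) z" using continuous_at_Arg2pi cf
      by (intro continuous_at_compose[unfolded o_def, of z Arg2pi f]) auto
    moreover have "(\<lambda>z. f (Arg z)) = (\<lambda>z. f (Arg2pi z))" using periodic_Arg_Arg2pi[OF p] by auto
    ultimately show ?thesis by simp
  qed
qed

definition trig_poly :: "(real \<Rightarrow> complex) \<Rightarrow> bool" where
  "trig_poly h \<longleftrightarrow> (\<exists>K b. finite K \<and> (\<forall>\<theta>. h \<theta> = (\<Sum>k\<in>K. b k * fourier_basis k \<theta>)))"

lemma trig_poly_monomial: "trig_poly (\<lambda>\<theta>. c * fourier_basis m \<theta>)"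
  unfolding trig_poly_def by (rule exI[of _ "{m}"], rule exI[of _ "\<lambda>_. c"]) simp

lemma trig_poly_const: "trig_poly (\<lambda>\<theta>. c)"
proof -
  have "(\<lambda>\<theta>. c) = (\<lambda>\<theta>. c * fourier_basis 0 \<theta>)" by (simp add: fourier_basis_def)
  then show ?thesis using trig_poly_monomial by simp
qed

lemma sum_extend_zero: assumes "finite K'" "K \<subseteq> K'"
  shows "(\<Sum>k\<in>K. b k * fourier_basis k \<theta>) = (\<Sum>k\<in>K'. (if k \<in> K then b k else 0) * fourier_basis k \<theta>)"
  by (rule sum.mono_neutral_cong_left[OF assms]) auto

lemma trig_poly_add:
  assumes "trig_poly h1" "trig_poly h2"
  shows "trig_poly (\<lambda>\<theta>. h1 \<theta> + h2 \<theta>)"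
proof -
  obtain K1 b1 where 1: "finite K1" "\<forall>\<theta>. h1 \<theta> = (\<Sum>k\<in>K1. b1 k * fourier_basis k \<theta>)" using assms(1) unfolding trig_poly_def by blast
  obtain K2 b2 where 2: "finite K2" "\<forall>\<theta>. h2 \<theta> = (\<Sum>k\<in>K2. b2 k * fourier_basis k \<theta>)" using assms(2) unfolding trig_poly_def by blast
  define b where "b k = (if k \<in> K1 then b1 k else 0) + (if k \<in> K2 then b2 k else 0)" for k
  have "h1 \<theta> + h2 \<theta> = (\<Sum>k\<in>K1 \<union> K2. b k * fourier_basis k \<theta>)" for \<theta>
  proof -
    have "h1 \<theta> = (\<Sum>k\<in>K1 \<union> K2. (if k \<in> K1 then b1 k else 0) * fourier_basis k \<theta>)"
      using 1 2 sum_extend_zero[of "K1 \<union> K2" K1 b1 \<theta>] by simp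
    moreover have "h2 \<theta> = (\<Sum>k\<in>K1 \<union> K2. (if k \<in> K2 then b2 k else 0) * fourier_basis k \<theta>)"
      using 1 2 sum_extend_zero[of "K1 \<union> K2" K2 b2 \<theta>] by simp
    ultimately show ?thesis unfolding b_def by (simp add: distrib_right sum.distrib)
  qed
  then show ?thesis unfolding trig_poly_def using 1 2 by blast
qed

lemma trig_poly_sum: "finite A \<Longrightarrow> (\<And>a. a \<in> A \<Longrightarrow> trig_poly (h a)) \<Longrightarrow> trig_poly (\<lambda>\<theta>. \<Sum>a\<in>A. h a \<theta>)"
proof (induction A rule: finite_induct)
  case empty then show ?case using trig_poly_const[of 0] by simp
next
  case (insert a A)
  then show ?case using trig_poly_add[of "h a" "\<lambda>\<theta>. \<Sum>a\<in>A. h a \<theta>"] by simp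
qed

lemma trig_poly_mult:
  assumes "trig_poly h1" "trig_poly h2"
  shows "trig_poly (\<lambda>\<theta>. h1 \<theta> * h2 \<theta>)"
proof -
  obtain K1 b1 where 1: "finite K1" "\<forall>\<theta>. h1 \<theta> = (\<Sum>k\<in>K1. b1 k * fourier_basis k \<theta>)" using assms(1) unfolding trig_poly_def by blast
  obtain K2 b2 where 2: "finite K2" "\<forall>\<theta>. h2 \<theta> = (\<Sum>k\<in>K2. b2 k * fourier_basis k \<theta>)" using assms(2) unfolding trig_poly_def by blast
  have "(\<lambda>\<theta>. h1 \<theta> * h2 \<theta>) = (\<lambda>\<theta>. \<Sum>k1\<in>K1. \<Sum>k2\<in>K2. (b1 k1 * b2 k2) * fourier_basis (k1 + k2) \<theta>)"
    using 1 2 by (auto simp: sum_product fourier_basis_mult[symmetric] mult_ac)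
  moreover have "trig_poly (\<lambda>\<theta>. \<Sum>k1\<in>K1. \<Sum>k2\<in>K2. (b1 k1 * b2 k2) * fourier_basis (k1 + k2) \<theta>)"
    using 1 2 by (intro trig_poly_sum trig_poly_monomial) auto
  ultimately show ?thesis by simp
qed

lemma trig_poly_cos: "trig_poly (\<lambda>\<theta>. complex_of_real (cos \<theta>))"
proof -
  have "complex_of_real (cos \<theta>) = (1/2) * fourier_basis 1 \<theta> + (1/2) * fourier_basis (-1) \<theta>" for \<theta>
    unfolding fourier_basis_def cos_of_real[symmetric] cos_exp_eq by simp
  then have eq: "(\<lambda>\<theta>. complex_of_real (cos \<theta>)) = (\<lambda>\<theta>. (1/2) * fourier_basis 1 \<theta> + (1/2) * fourier_basis (-1) \<theta>)" by (rule ext)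
  show ?thesis unfolding eq by (rule trig_poly_add[OF trig_poly_monomial trig_poly_monomial])
qed

lemma trig_poly_sin: "trig_poly (\<lambda>\<theta>. complex_of_real (sin \<theta>))"
proof -
  have "complex_of_real (sin \<theta>) = (1 / (2 * \<i>)) * fourier_basis 1 \<theta> + (- 1 / (2 * \<i>)) * fourier_basis (-1) \<theta>" for \<theta>
    unfolding fourier_basis_def sin_of_real[symmetric] sin_exp_eq by (simp add: field_simps)
  then have eq: "(\<lambda>\<theta>. complex_of_real (sin \<theta>)) = (\<lambda>\<theta>. (1 / (2 * \<i>)) * fourier_basis 1 \<theta> + (- 1 / (2 * \<i>)) * fourier_basis (-1) \<theta>)" by (rule ext)
  show ?thesis unfolding eq by (rule trig_poly_add[OF trig_poly_monomial trig_poly_monomial])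
qed

lemma linear_complex_decomp: assumes "linear q" shows "q z = Re z * q 1 + Im z * q \<i>"
proof -
  have "z = Re z *\<^sub>R 1 + Im z *\<^sub>R \<i>" by (simp add: complex_eq_iff)
  then have "q z = q (Re z *\<^sub>R 1 + Im z *\<^sub>R \<i>)" by simp
  also have "\<dots> = Re z *\<^sub>R q 1 + Im z *\<^sub>R q \<i>" using assms by (simp add: linear_add linear_scale)
  finally show ?thesis by simp
qed

lemma trig_poly_real_polynomial_cis: assumes "real_polynomial_function q"
  shows "trig_poly (\<lambda>\<theta>. complex_of_real (q (cis \<theta>)))"
  using assms
proof (induction q rule: real_polynomial_function.induct)
  case (linear q)
  then have l: "linear q" by (rule bounded_linear.linear)
  have eq: "(\<lambda>\<theta>. complex_of_real (q (cis \<theta>))) =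
     (\<lambda>\<theta>. complex_of_real (cos \<theta>) * complex_of_real (q 1) + complex_of_real (sin \<theta>) * complex_of_real (q \<i>))"
  proof (rule ext)
    fix \<theta>
    have "q (cis \<theta>) = Re (cis \<theta>) * q 1 + Im (cis \<theta>) * q \<i>" by (rule linear_complex_decomp[OF l])
    then show "complex_of_real (q (cis \<theta>)) = complex_of_real (cos \<theta>) * complex_of_real (q 1) + complex_of_real (sin \<theta>) * complex_of_real (q \<i>)"
      by simp
  qed
  show ?case unfolding eq by (rule trig_poly_add[OF trig_poly_mult[OF trig_poly_cos trig_poly_const] trig_poly_mult[OF trig_poly_sin trig_poly_const]])
next
  case (const c) then show ?case using trig_poly_const by simp
next
  case (add f g) then show ?case using trig_poly_add by simp
next
  case (mult f g) then show ?case using trig_poly_mult by simp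
qed

lemma trig_poly_polynomial_cis: assumes "polynomial_function (P :: complex \<Rightarrow> complex)"
  shows "trig_poly (\<lambda>\<theta>. P (cis \<theta>))"
proof -
  have re: "real_polynomial_function (Re \<circ> P)" and im: "real_polynomial_function (Im \<circ> P)"
    using assms bounded_linear_Re bounded_linear_Im unfolding polynomial_function_def by blast+
  have eq: "(\<lambda>\<theta>. P (cis \<theta>)) = (\<lambda>\<theta>. complex_of_real ((Re \<circ> P) (cis \<theta>)) + \<i> * complex_of_real ((Im \<circ> P) (cis \<theta>)))"
    by (rule ext) (simp add: complex_eq_iff)
  show ?thesis unfolding eq by (rule trig_poly_add[OF trig_poly_real_polynomial_cis[OF re] trig_poly_mult[OF trig_poly_const trig_poly_real_polynomial_cis[OF im]]])
qed

text \<open>Stone--Weierstrass on the unit circle, applied to \<open>z \<mapsto> f (Arg z)\<close>.\<close>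

theorem trig_poly_approx:
  assumes c: "continuous_on UNIV f" and p: "\<forall>x. f (x + 2 * pi) = f x" and e: "0 < e"
  shows "\<exists>K b. finite K \<and> (\<forall>\<theta>. cmod (f \<theta> - (\<Sum>k\<in>K. b k * fourier_basis k \<theta>)) \<le> e)"
proof -
  obtain P where P: "polynomial_function P" "\<forall>z\<in>sphere 0 1. norm ((\<lambda>z. f (Arg z)) z - P z) < e"
    using Stone_Weierstrass_polynomial_function[OF compact_sphere continuous_on_sphere_Arg[OF c p] e] by blast
  obtain K b where Kb: "finite K" "\<forall>\<theta>. P (cis \<theta>) = (\<Sum>k\<in>K. b k * fourier_basis k \<theta>)"
    using trig_poly_polynomial_cis[OF P(1)] unfolding trig_poly_def by blast
  have "cmod (f \<theta> - (\<Sum>k\<in>K. b k * fourier_basis k \<theta>)) \<le> e" for \<theta>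
  proof -
    have "cis \<theta> \<in> sphere 0 1" by simp
    then have "norm (f (Arg (cis \<theta>)) - P (cis \<theta>)) < e" using P(2) by blast
    then show ?thesis using Kb(2) periodic_Arg_cis[OF p] by simp
  qed
  then show ?thesis using Kb(1) by blast
qed

section \<open>Toeplitz minus circulant\<close>

lemma fourier_coeff_add: assumes u: "continuous_on {-pi..pi} u" and w: "continuous_on {-pi..pi} w"
  shows "fourier_coeff (\<lambda>\<theta>. u \<theta> + w \<theta>) k = fourier_coeff u k + fourier_coeff w k"
proof -
  have cu: "(\<lambda>\<theta>. u \<theta> * exp (- \<i> * of_int k * of_real \<theta>)) integrable_on {-pi..pi}"
    by (intro integrable_continuous_interval continuous_intros u)
  have cw: "(\<lambda>\<theta>. w \<theta> * exp (- \<i> * of_int k * of_real \<theta>)) integrable_on {-pi..pi}"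
    by (intro integrable_continuous_interval continuous_intros w)
  have "integral {-pi..pi} (\<lambda>\<theta>. (u \<theta> + w \<theta>) * exp (- \<i> * of_int k * of_real \<theta>)) =
      integral {-pi..pi} (\<lambda>\<theta>. u \<theta> * exp (- \<i> * of_int k * of_real \<theta>) + w \<theta> * exp (- \<i> * of_int k * of_real \<theta>))"
    by (simp add: distrib_right)
  also have "\<dots> = integral {-pi..pi} (\<lambda>\<theta>. u \<theta> * exp (- \<i> * of_int k * of_real \<theta>)) +
      integral {-pi..pi} (\<lambda>\<theta>. w \<theta> * exp (- \<i> * of_int k * of_real \<theta>))"
    by (rule integral_add[OF cu cw])
  finally show ?thesis unfolding fourier_coeff_def by (simp add: add_divide_distrib)
qed

lemma toeplitz_add: assumes u: "continuous_on {-pi..pi} u" and w: "continuous_on {-pi..pi} w"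
  shows "toeplitz (\<lambda>\<theta>. u \<theta> + w \<theta>) n = toeplitz u n + toeplitz w n"
  by (rule eq_matI) (auto simp: toeplitz_def fourier_coeff_add[OF u w])

lemma opt_circ_add: assumes u: "continuous_on {-pi..pi} u" and w: "continuous_on {-pi..pi} w"
  shows "opt_circ (\<lambda>\<theta>. u \<theta> + w \<theta>) n = opt_circ u n + opt_circ w n"
  by (rule eq_matI) (auto simp: opt_circ_def opt_circ_coeff_def fourier_coeff_add[OF u w] ring_distribs add_divide_distrib[symmetric])

lemma continuous_on_trig_sum: "continuous_on S (\<lambda>\<theta>. \<Sum>k\<in>K. b k * fourier_basis k \<theta>)"
  by (intro continuous_on_sum continuous_on_mult continuous_on_const continuous_on_fourier_basis)

lemma norm_trig_sum_le: "cmod (\<Sum>k\<in>K. b k * fourier_basis k \<theta>) \<le> (\<Sum>k\<in>K. cmod (b k))"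
proof -
  have "cmod (\<Sum>k\<in>K. b k * fourier_basis k \<theta>) \<le> (\<Sum>k\<in>K. cmod (b k * fourier_basis k \<theta>))" by (rule norm_sum)
  also have "\<dots> = (\<Sum>k\<in>K. cmod (b k))" by (simp add: norm_mult norm_fourier_basis)
  finally show ?thesis .
qed

lemma opt_circ_index_banded:
  assumes band: "\<And>t. int D < \<bar>t\<bar> \<Longrightarrow> fourier_coeff g t = 0"
    and k: "k < n" and jD: "D \<le> j" "j < n - D"
  shows "opt_circ g n $$ (j, k) = (1 - of_int \<bar>int j - int k\<bar> / of_nat n) * fourier_coeff g (int j - int k)"
proof -
  define s where "s = int j - int k"
  have j: "j < n" using jD by simp
  have s: "s < int n - int D" "int D - int n < s" unfolding s_def using j k jD by auto
  have n: "of_nat n \<noteq> (0::complex)" using j by simp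
  have entry: "opt_circ g n $$ (j, k) = opt_circ_coeff g n (nat (s mod int n))"
    using j k by (simp add: opt_circ_index s_def)
  show ?thesis
  proof (cases "0 \<le> s")
    case True
    have "s mod int n = s" using True s by (simp add: mod_pos_pos_trivial)
    moreover have "fourier_coeff g (s - int n) = 0" using band s True by simp
    moreover have e: "of_nat (n - nat s) = (of_nat n - of_int s :: complex)"
      using True s by (simp add: of_nat_diff)
    ultimately show ?thesis unfolding entry opt_circ_coeff_def s_def[symmetric] using True n
      by (simp add: field_simps e)
  next
    case False
    have "(s + int n) mod int n = s + int n" using s False by (intro mod_pos_pos_trivial) auto
    then have "s mod int n = s + int n" by simp
    moreover have "fourier_coeff g (s + int n) = 0" using band s False by simp
    moreover have e: "of_nat (n - nat (s + int n)) = (- of_int s :: complex)"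
      using False s by (simp add: of_nat_diff)
    ultimately show ?thesis unfolding entry opt_circ_coeff_def s_def[symmetric] using False s n
      by (simp add: field_simps e)
  qed
qed

text \<open>Away from the first and last \<open>D\<close> rows, \<open>A\<^sub>n[p] - c\<^sub>n[p] = A\<^sub>n[q] / n\<close>, where
  \<open>q\<close> has the Fourier coefficients \<open>|k| b\<^sub>k\<close>.\<close>

lemma toeplitz_trig_decomp:
  fixes b :: "int \<Rightarrow> complex"
  assumes K: "finite K" and KD: "\<forall>k\<in>K. \<bar>k\<bar> \<le> int D" and n: "2 * D < n"
  shows "\<exists>R E. toeplitz (\<lambda>\<theta>. \<Sum>k\<in>K. b k * fourier_basis k \<theta>) n = opt_circ (\<lambda>\<theta>. \<Sum>k\<in>K. b k * fourier_basis k \<theta>) n + R + E \<and>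
     low_rank n (2 * D) R \<and> op_bound n E ((\<Sum>k\<in>K. of_int \<bar>k\<bar> * cmod (b k)) / real n)"
proof -
  define p where "p = (\<lambda>\<theta>. \<Sum>k\<in>K. b k * fourier_basis k \<theta>)"
  define q where "q = (\<lambda>\<theta>. \<Sum>k\<in>K. (of_int \<bar>k\<bar> * b k) * fourier_basis k \<theta>)"
  define Q where "Q = (\<Sum>k\<in>K. of_int \<bar>k\<bar> * cmod (b k))"
  have fcp: "fourier_coeff p s = (if s \<in> K then b s else 0)" for s
    unfolding p_def by (rule fourier_coeff_trig_sum[OF K])
  have fcq: "fourier_coeff q s = of_int \<bar>s\<bar> * fourier_coeff p s" for s
    unfolding q_def fcp using fourier_coeff_trig_sum[OF K] by simp
  have band: "fourier_coeff p t = 0" if "int D < \<bar>t\<bar>" for t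
    using KD that unfolding fcp by force
  define E where "E = (1 / of_nat n) \<cdot>\<^sub>m toeplitz q n"
  define R where "R = toeplitz p n - opt_circ p n - E"
  have cT: "toeplitz p n \<in> carrier_mat n n" "opt_circ p n \<in> carrier_mat n n" "E \<in> carrier_mat n n"
    unfolding E_def by (auto simp: toeplitz_carrier opt_circ_carrier)
  have Rc: "R \<in> carrier_mat n n" unfolding R_def using cT(3) by (rule minus_carrier_mat)
  have eq: "toeplitz p n = opt_circ p n + R + E"
    unfolding R_def using cT[THEN carrier_matD(1)] cT[THEN carrier_matD(2)] by (intro eq_matI) auto
  have low_rank_R: "low_rank n (2 * D) R"
  proof (rule low_rank_outside_rows[OF Rc])
    show "2 * D \<le> n" using n by simp
    fix j k assume jk: "j < n" "k < n" "D \<le> j" "j < n - D"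
    have "R $$ (j, k) = fourier_coeff p (int j - int k) - opt_circ p n $$ (j, k)
        - (1 / of_nat n) * (of_int \<bar>int j - int k\<bar> * fourier_coeff p (int j - int k))"
      unfolding R_def E_def using jk toeplitz_carrier[of p n] toeplitz_carrier[of q n] opt_circ_carrier[of p n]
      by (simp add: toeplitz_index fcq carrier_matD)
    also have "\<dots> = 0"
      using jk by (simp add: opt_circ_index_banded[OF band jk(2-4)] field_simps)
    finally show "R $$ (j, k) = 0" .
  qed
  have qb: "\<forall>\<theta>\<in>{-pi..pi}. cmod (q \<theta>) \<le> Q"
  proof
    fix \<theta> :: real
    have "cmod (q \<theta>) \<le> (\<Sum>k\<in>K. cmod (of_int \<bar>k\<bar> * b k))" unfolding q_def by (rule norm_trig_sum_le)
    also have "\<dots> = Q" unfolding Q_def by (simp add: norm_mult)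
    finally show "cmod (q \<theta>) \<le> Q" .
  qed
  have "op_bound n (toeplitz q n) Q" unfolding q_def using qb unfolding q_def by (intro op_bound_toeplitz continuous_on_trig_sum)
  then have "op_bound n E (cmod (1 / of_nat n) * Q)" unfolding E_def by (rule op_bound_smult)
  moreover have "cmod (1 / of_nat n :: complex) * Q = Q / real n" by (simp add: norm_divide)
  ultimately have "op_bound n E (Q / real n)" by simp
  then show ?thesis using eq low_rank_R unfolding p_def Q_def by blast
qed

lemma toeplitz_trig_decomp_eventually:
  fixes b :: "int \<Rightarrow> complex"
  assumes K: "finite K" and e: "0 < e"
  shows "\<exists>r N. \<forall>n>N. \<exists>R E. toeplitz (\<lambda>\<theta>. \<Sum>k\<in>K. b k * fourier_basis k \<theta>) n
           = opt_circ (\<lambda>\<theta>. \<Sum>k\<in>K. b k * fourier_basis k \<theta>) n + R + E \<and> low_rank n r R \<and> op_bound n E e"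
proof -
  define D where "D = nat (\<Sum>k\<in>K. \<bar>k\<bar>)"
  have KD: "\<forall>k\<in>K. \<bar>k\<bar> \<le> int D"
    unfolding D_def using K member_le_sum[of _ K abs] by fastforce
  define Q where "Q = (\<Sum>k\<in>K. of_int \<bar>k\<bar> * cmod (b k))"
  define N where "N = max (2 * D) (nat \<lceil>Q / e\<rceil>)"
  show ?thesis
  proof (rule exI[of _ "2 * D"], rule exI[of _ N], intro allI impI)
    fix n assume n: "N < n"
    then have "Q / e < real n" unfolding N_def by linarith
    then have Qn: "Q / real n \<le> e" using e n by (simp add: field_simps)
    obtain R E where "toeplitz (\<lambda>\<theta>. \<Sum>k\<in>K. b k * fourier_basis k \<theta>) n
        = opt_circ (\<lambda>\<theta>. \<Sum>k\<in>K. b k * fourier_basis k \<theta>) n + R + E"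
      and "low_rank n (2 * D) R" and "op_bound n E (Q / real n)"
      using toeplitz_trig_decomp[OF K KD, of n b] n unfolding N_def Q_def by auto
    then show "\<exists>R E. toeplitz (\<lambda>\<theta>. \<Sum>k\<in>K. b k * fourier_basis k \<theta>) n
        = opt_circ (\<lambda>\<theta>. \<Sum>k\<in>K. b k * fourier_basis k \<theta>) n + R + E \<and> low_rank n (2 * D) R \<and> op_bound n E e"
      using op_bound_mono[OF _ Qn] by blast
  qed
qed

lemma toeplitz_opt_circ_decomp_add:
  assumes u: "continuous_on {-pi..pi} u" and w: "continuous_on {-pi..pi} w"
    and wS: "\<forall>\<theta>\<in>{-pi..pi}. cmod (w \<theta>) \<le> S"
    and dec: "toeplitz u n = opt_circ u n + R + E" and R: "low_rank n r R" and E: "op_bound n E d"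
  shows "\<exists>E'. toeplitz (\<lambda>\<theta>. u \<theta> + w \<theta>) n = opt_circ (\<lambda>\<theta>. u \<theta> + w \<theta>) n + R + E' \<and>
           op_bound n E' (d + (S + S))"
proof (intro exI conjI)
  have c: "toeplitz u n \<in> carrier_mat n n" "opt_circ u n \<in> carrier_mat n n" "toeplitz w n \<in> carrier_mat n n"
    "opt_circ w n \<in> carrier_mat n n" "R \<in> carrier_mat n n" "E \<in> carrier_mat n n"
    using toeplitz_carrier opt_circ_carrier low_rank_carrier[OF R] op_bound_carrier[OF E] by auto
  show "toeplitz (\<lambda>\<theta>. u \<theta> + w \<theta>) n = opt_circ (\<lambda>\<theta>. u \<theta> + w \<theta>) n + R + (E + (toeplitz w n - opt_circ w n))"
    unfolding toeplitz_add[OF u w] opt_circ_add[OF u w] dec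
    using c[THEN carrier_matD(1)] c[THEN carrier_matD(2)] by (intro eq_matI) auto
  show "op_bound n (E + (toeplitz w n - opt_circ w n)) (d + (S + S))"
    by (intro op_bound_add E op_bound_minus op_bound_toeplitz[OF w wS] op_bound_opt_circ[OF w wS])
qed

theorem toeplitz_opt_circ_decomp:
  assumes c: "continuous_on UNIV f" and p: "\<forall>x. f (x + 2 * pi) = f x" and d: "0 < \<delta>"
  shows "\<exists>r N. \<forall>n>N. \<exists>R E. toeplitz f n = opt_circ f n + R + E \<and> low_rank n r R \<and> op_bound n E \<delta>"
proof -
  have e: "0 < \<delta> / 3" using d by simp
  obtain K b where K: "finite K" and app: "\<forall>\<theta>. cmod (f \<theta> - (\<Sum>k\<in>K. b k * fourier_basis k \<theta>)) \<le> \<delta> / 3"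
    using trig_poly_approx[OF c p e] by blast
  define P where "P = (\<lambda>\<theta>. \<Sum>k\<in>K. b k * fourier_basis k \<theta>)"
  define g where "g = (\<lambda>\<theta>. f \<theta> - P \<theta>)"
  have cP: "continuous_on {-pi..pi} P" unfolding P_def by (rule continuous_on_trig_sum)
  have cg: "continuous_on {-pi..pi} g" unfolding g_def
    by (intro continuous_on_diff cP continuous_on_subset[OF c]) auto
  have gb: "\<forall>\<theta>\<in>{-pi..pi}. cmod (g \<theta>) \<le> \<delta> / 3" using app unfolding g_def P_def by simp
  have fPg: "f = (\<lambda>\<theta>. P \<theta> + g \<theta>)" unfolding g_def by auto
  obtain r N where rN: "\<forall>n>N. \<exists>R E. toeplitz P n = opt_circ P n + R + E \<and> low_rank n r R \<and> op_bound n E (\<delta> / 3)"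
    using toeplitz_trig_decomp_eventually[OF K e, of b] unfolding P_def by blast
  show ?thesis
  proof (rule exI[of _ r], rule exI[of _ N], intro allI impI)
    fix n assume "N < n"
    then obtain R E where dec: "toeplitz P n = opt_circ P n + R + E" and R: "low_rank n r R"
      and E: "op_bound n E (\<delta> / 3)" using rN by blast
    obtain E' where "toeplitz f n = opt_circ f n + R + E'" and "op_bound n E' (\<delta> / 3 + (\<delta> / 3 + \<delta> / 3))"
      unfolding fPg using toeplitz_opt_circ_decomp_add[OF cP cg gb dec R E] by blast
    then show "\<exists>R E. toeplitz f n = opt_circ f n + R + E \<and> low_rank n r R \<and> op_bound n E \<delta>"
      using R by auto
  qed
qed

lemma mat_cos_toeplitz_decomp:
  assumes cont: "continuous_on UNIV f" and periodic: "\<forall>x. f (x + 2 * pi) = f x" and eta: "0 < \<eta>"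
  shows "\<exists>r N. \<forall>n>N. \<exists>R E. mat_cos (toeplitz f n) = mat_cos (opt_circ f n) + R + E \<and>
           low_rank n r R \<and> op_bound n E \<eta>"
proof -
  have "bounded (f ` {-pi..pi})"
    by (intro compact_imp_bounded compact_continuous_image continuous_on_subset[OF cont]) auto
  then obtain S where S: "\<forall>\<theta>\<in>{-pi..pi}. cmod (f \<theta>) \<le> S" unfolding bounded_iff by blast
  have S0: "0 \<le> S" using sup_bound_nonneg[OF S] .
  have cf: "continuous_on {-pi..pi} f" using continuous_on_subset[OF cont] by auto
  have "eventually (\<lambda>K. cos_tail S K < \<eta> / 4) sequentially"
    using cos_tail_tendsto[of S] eta by (intro order_tendstoD(2)) auto
  then obtain K where K: "cos_tail S K < \<eta> / 4" by (auto simp: eventually_sequentially)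
  define L where "L = cos_partial_lip S K"
  have L0: "0 \<le> L" unfolding L_def cos_partial_lip_def using S0 by (intro sum_nonneg) simp
  define \<delta> where "\<delta> = min 1 (\<eta> / (2 * (L + 1)))"
  have d0: "0 < \<delta>" and d1: "\<delta> \<le> 1" unfolding \<delta>_def using eta L0 by auto
  have "L * \<delta> \<le> L * (\<eta> / (2 * (L + 1)))" unfolding \<delta>_def using L0 by (intro mult_left_mono) auto
  also have "\<dots> \<le> \<eta> / 2" using eta L0 by (simp add: field_simps)
  finally have L\<delta>: "L * \<delta> \<le> \<eta> / 2" .
  obtain r N where rN: "\<forall>n>N. \<exists>R E. toeplitz f n = opt_circ f n + R + E \<and> low_rank n r R \<and> op_bound n E \<delta>"
    using toeplitz_opt_circ_decomp[OF cont periodic d0] by blast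
  show ?thesis
  proof (rule exI[of _ "2 * K * K * r"], rule exI[of _ N], intro allI impI)
    fix n assume "N < n"
    then obtain R0 E0 where dec: "toeplitz f n = opt_circ f n + R0 + E0"
      and R0: "low_rank n r R0" and E0: "op_bound n E0 \<delta>"
      using rN by blast
    obtain R1 E1 where cs: "mat_cos (toeplitz f n) = mat_cos (opt_circ f n) + R1 + E1"
      and R1: "low_rank n (2 * K * K * r) R1" and E1: "op_bound n E1 (cos_tail S K + cos_tail S K + L * \<delta>)"
      using mat_cos_perturb_decomp[OF op_bound_opt_circ[OF cf S] dec R0 E0 op_bound_toeplitz[OF cf S] S0
          less_imp_le[OF d0] d1] unfolding L_def by blast
    have "op_bound n E1 \<eta>" by (rule op_bound_mono[OF E1]) (use K L\<delta> in linarith)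
    then show "\<exists>R E. mat_cos (toeplitz f n) = mat_cos (opt_circ f n) + R + E \<and>
        low_rank n (2 * K * K * r) R \<and> op_bound n E \<eta>"
      using cs R1 by blast
  qed
qed

section \<open>The preconditioned normal matrix\<close>

lemma mat_inv_correct: assumes B: "B \<in> carrier_mat n n" and inv: "invertible_mat B"
  shows "mat_inv B \<in> carrier_mat n n \<and> B * mat_inv B = 1\<^sub>m n \<and> mat_inv B * B = 1\<^sub>m n"
proof -
  obtain X where X1: "B * X = 1\<^sub>m (dim_row B)" and X2: "X * B = 1\<^sub>m (dim_row X)"
    using inv unfolding invertible_mat_def inverts_mat_def by blast
  have dB: "dim_row B = n" "dim_col B = n" using B by auto
  have dcX: "dim_col X = n" using arg_cong[OF X1, of dim_col] dB by simp
  have drX: "dim_row X = n" using arg_cong[OF X2, of dim_col] dB by simp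
  have Xc: "X \<in> carrier_mat n n" using dcX drX by auto
  have P: "X \<in> carrier_mat (dim_row B) (dim_row B) \<and> B * X = 1\<^sub>m (dim_row B) \<and> X * B = 1\<^sub>m (dim_row B)"
    using Xc X1 X2 dB drX by simp
  have U: "Y = X" if Y: "Y \<in> carrier_mat (dim_row B) (dim_row B) \<and> B * Y = 1\<^sub>m (dim_row B) \<and> Y * B = 1\<^sub>m (dim_row B)" for Y
  proof -
    have Yc: "Y \<in> carrier_mat n n" using Y dB by simp
    have "Y = Y * (B * X)" using X1 dB Yc by simp
    also have "\<dots> = (Y * B) * X" using Yc B Xc by (simp add: assoc_mult_mat)
    also have "\<dots> = X" using Y dB Xc by simp
    finally show ?thesis .
  qed
  have "mat_inv B = X" unfolding mat_inv_def
  proof (rule the_equality)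
    show "X \<in> carrier_mat (dim_row B) (dim_row B) \<and> B * X = 1\<^sub>m (dim_row B) \<and> X * B = 1\<^sub>m (dim_row B)" using P .
  next
    fix Y assume "Y \<in> carrier_mat (dim_row B) (dim_row B) \<and> B * Y = 1\<^sub>m (dim_row B) \<and> Y * B = 1\<^sub>m (dim_row B)"
    then show "Y = X" by (rule U)
  qed
  then show ?thesis using Xc X1 X2 dB drX by simp
qed

lemma mat_adjoint_mult_self_expand:
  fixes XR XE :: "complex mat"
  assumes XR: "XR \<in> carrier_mat n n" and XE: "XE \<in> carrier_mat n n"
  defines "P \<equiv> 1\<^sub>m n + XR + XE"
  shows "mat_adjoint P * P = 1\<^sub>m n + (XR + mat_adjoint XR * P + mat_adjoint XE * XR)
           + (XE + mat_adjoint XE + mat_adjoint XE * XE)"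
proof -
  have Pc: "P \<in> carrier_mat n n" unfolding P_def using XR XE by simp
  have adjXR: "mat_adjoint XR \<in> carrier_mat n n" and adjXE: "mat_adjoint XE \<in> carrier_mat n n"
    using mat_adjoint_carrier[OF XR] mat_adjoint_carrier[OF XE] by auto
  have adjP: "mat_adjoint P = 1\<^sub>m n + mat_adjoint XR + mat_adjoint XE"
    unfolding P_def using XR XE mat_adjoint_add[of "1\<^sub>m n + XR" n XE] mat_adjoint_add[of "1\<^sub>m n" n XR]
    by (simp add: mat_adjoint_one)
  have "mat_adjoint P * P = (1\<^sub>m n + mat_adjoint XR) * P + mat_adjoint XE * P"
    unfolding adjP using adjXR adjXE Pc by (intro add_mult_distrib_mat) auto
  also have "(1\<^sub>m n + mat_adjoint XR) * P = 1\<^sub>m n * P + mat_adjoint XR * P"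
    using adjXR Pc by (intro add_mult_distrib_mat) auto
  also have "mat_adjoint XE * P = mat_adjoint XE * (1\<^sub>m n + XR) + mat_adjoint XE * XE"
    unfolding P_def using adjXE XR XE by (intro mult_add_distrib_mat) auto
  also have "mat_adjoint XE * (1\<^sub>m n + XR) = mat_adjoint XE * 1\<^sub>m n + mat_adjoint XE * XR"
    using adjXE XR by (intro mult_add_distrib_mat) auto
  finally show ?thesis
    using Pc XR XE adjXR adjXE by (intro eq_matI) (auto simp: P_def)
qed

lemma preconditioned_normal_decomp:
  assumes B: "B \<in> carrier_mat n n" and inv: "invertible_mat B"
    and c: "spec_norm (mat_inv B) \<le> c" "0 \<le> c"
    and A: "A = B + R1 + E1" and R1: "low_rank n \<rho> R1" and E1: "op_bound n E1 \<eta>" and eta: "0 \<le> \<eta>"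
  shows "\<exists>R E. R \<in> carrier_mat n n \<and> E \<in> carrier_mat n n \<and>
           mat_adjoint (mat_inv B * A) * (mat_inv B * A) = 1\<^sub>m n + R + E \<and>
           mat_rank R \<le> 3 * \<rho> \<and> spec_norm E \<le> 2 * (c * \<eta>) + (c * \<eta>) * (c * \<eta>)"
proof -
  have Bi: "mat_inv B \<in> carrier_mat n n" "mat_inv B * B = 1\<^sub>m n" using mat_inv_correct[OF B inv] by auto
  have Bi_bound: "op_bound n (mat_inv B) c" using op_bound_of_spec_norm_le[OF Bi(1) c(1)] .
  have R1c: "R1 \<in> carrier_mat n n" using low_rank_carrier[OF R1] .
  have E1c: "E1 \<in> carrier_mat n n" using op_bound_carrier[OF E1] .
  define XR where "XR = mat_inv B * R1"
  define XE where "XE = mat_inv B * E1"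
  have XR: "low_rank n \<rho> XR" unfolding XR_def using R1 Bi(1) by (rule low_rank_mult_left)
  have XE: "op_bound n XE (c * \<eta>)" unfolding XE_def by (rule op_bound_mult[OF Bi_bound E1 c(2)])
  have XRc: "XR \<in> carrier_mat n n" and XEc: "XE \<in> carrier_mat n n"
    using low_rank_carrier[OF XR] op_bound_carrier[OF XE] .
  have "mat_inv B * A = mat_inv B * (B + R1) + XE"
    unfolding A XE_def using Bi B R1c E1c by (intro mult_add_distrib_mat) auto
  also have "mat_inv B * (B + R1) = 1\<^sub>m n + XR"
    using mult_add_distrib_mat[OF Bi(1) B R1c] Bi(2) unfolding XR_def by simp
  finally have P: "mat_inv B * A = 1\<^sub>m n + XR + XE" .
  define R where "R = XR + mat_adjoint XR * (1\<^sub>m n + XR + XE) + mat_adjoint XE * XR"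
  define E where "E = XE + mat_adjoint XE + mat_adjoint XE * XE"
  have "low_rank n (\<rho> + \<rho> + \<rho>) R" unfolding R_def using XRc XEc
    by (intro low_rank_add XR low_rank_mult_right[OF low_rank_adjoint[OF XR]]
        low_rank_mult_left[OF XR mat_adjoint_carrier]) auto
  then have Rc: "R \<in> carrier_mat n n" and rank: "mat_rank R \<le> 3 * \<rho>"
    using low_rank_carrier mat_rank_le_low_rank[of n "\<rho> + \<rho> + \<rho>" R] by auto
  have "op_bound n E (c * \<eta> + c * \<eta> + c * \<eta> * (c * \<eta>))" unfolding E_def
    using c eta by (intro op_bound_add XE op_bound_adjoint op_bound_mult[OF op_bound_adjoint[OF XE] XE]) simp
  then have Ec: "E \<in> carrier_mat n n" and norm: "spec_norm E \<le> 2 * (c * \<eta>) + (c * \<eta>) * (c * \<eta>)"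
    using c eta by (auto intro: op_bound_carrier spec_norm_le_op_bound simp: algebra_simps)
  have "mat_adjoint (mat_inv B * A) * (mat_inv B * A) = 1\<^sub>m n + R + E"
    unfolding P R_def E_def by (rule mat_adjoint_mult_self_expand[OF XRc XEc])
  then show ?thesis using Rc Ec rank norm by blast
qed

lemma exists_quadratic_le:
  fixes c \<epsilon> :: real
  assumes c: "0 \<le> c" and eps: "0 < \<epsilon>"
  shows "\<exists>\<eta>>0. 2 * (c * \<eta>) + (c * \<eta>) * (c * \<eta>) \<le> \<epsilon>"
proof -
  define t where "t = min 1 (\<epsilon> / 3)"
  have t: "0 < t" "t \<le> 1" "t \<le> \<epsilon> / 3" using eps by (auto simp: t_def)
  have ct: "c * (t / (c + 1)) \<le> t" using c t by (simp add: field_simps)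
  have "2 * (c * (t / (c + 1))) + (c * (t / (c + 1))) * (c * (t / (c + 1))) \<le> 2 * t + t * t"
    using ct c t by (intro add_mono mult_mono) auto
  also have "\<dots> \<le> \<epsilon>" using t mult_left_le_one_le[of t t] by linarith
  finally show ?thesis using t c by (intro exI[of _ "t / (c + 1)"]) auto
qed

theorem mainTheorem11:
  fixes f :: "real \<Rightarrow> complex"
  assumes cont: "continuous_on UNIV f"
    and periodic: "\<forall>x. f (x + 2 * pi) = f x"
    and inv: "\<forall>n>0. invertible_mat (mat_cos (opt_circ f n))"
    and bound: "\<exists>C. \<forall>n>0. spec_norm (mat_inv (mat_cos (opt_circ f n))) \<le> C"
    and eps: "\<epsilon> > 0"
  shows "\<exists>N M :: nat. N > 0 \<and> M > 0 \<and> (\<forall>n>N. \<exists>R E :: complex mat.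
           R \<in> carrier_mat n n \<and> E \<in> carrier_mat n n \<and>
           mat_adjoint (mat_inv (mat_cos (opt_circ f n)) * mat_cos (toeplitz f n))
             * (mat_inv (mat_cos (opt_circ f n)) * mat_cos (toeplitz f n))
             = 1\<^sub>m n + R + E \<and>
           mat_rank R \<le> 4 * M \<and> spec_norm E \<le> \<epsilon>)"
proof -
  obtain C where C: "\<forall>n>0. spec_norm (mat_inv (mat_cos (opt_circ f n))) \<le> C" using bound by blast
  define C' where "C' = max C 0"
  have C'0: "0 \<le> C'" unfolding C'_def by simp
  obtain \<eta> where eta: "0 < \<eta>" and small: "2 * (C' * \<eta>) + (C' * \<eta>) * (C' * \<eta>) \<le> \<epsilon>"
    using exists_quadratic_le[OF C'0 eps] by blast
  obtain r N where dec: "\<forall>n>N. \<exists>R E. mat_cos (toeplitz f n) = mat_cos (opt_circ f n) + R + E \<and>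
      low_rank n r R \<and> op_bound n E \<eta>"
    using mat_cos_toeplitz_decomp[OF cont periodic eta] by blast
  show ?thesis
  proof (rule exI[of _ "N + 1"], rule exI[of _ "r + 1"], intro conjI allI impI)
    fix n assume n: "N + 1 < n"
    obtain R1 E1 where cs: "mat_cos (toeplitz f n) = mat_cos (opt_circ f n) + R1 + E1"
      and R1: "low_rank n r R1" and E1: "op_bound n E1 \<eta>"
      using dec n by (meson less_trans less_add_one)
    have "spec_norm (mat_inv (mat_cos (opt_circ f n))) \<le> C'" using C n by (simp add: C'_def le_max_iff_disj)
    moreover have "invertible_mat (mat_cos (opt_circ f n))" using inv n by simp
    ultimately obtain R E where RE: "R \<in> carrier_mat n n" "E \<in> carrier_mat n n"
      "mat_adjoint (mat_inv (mat_cos (opt_circ f n)) * mat_cos (toeplitz f n))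
         * (mat_inv (mat_cos (opt_circ f n)) * mat_cos (toeplitz f n)) = 1\<^sub>m n + R + E"
      and rank: "mat_rank R \<le> 3 * r" and norm: "spec_norm E \<le> 2 * (C' * \<eta>) + (C' * \<eta>) * (C' * \<eta>)"
      using preconditioned_normal_decomp[OF mat_cos_carrier[OF opt_circ_carrier] _ _ C'0 cs R1 E1]
        less_imp_le[OF eta] by blast
    have "mat_rank R \<le> 4 * (r + 1)" using rank by simp
    moreover have "spec_norm E \<le> \<epsilon>" using norm small by linarith
    ultimately show "\<exists>R E. R \<in> carrier_mat n n \<and> E \<in> carrier_mat n n \<and>
        mat_adjoint (mat_inv (mat_cos (opt_circ f n)) * mat_cos (toeplitz f n))
          * (mat_inv (mat_cos (opt_circ f n)) * mat_cos (toeplitz f n)) = 1\<^sub>m n + R + E \<and>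
        mat_rank R \<le> 4 * (r + 1) \<and> spec_norm E \<le> \<epsilon>"
      using RE by blast
  qed simp_all
qed

end
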